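(* Let $\phi: M_n\to M_n$ be a unital PPT map with $\phi\circ\phi=\phi$. Then the range $\phi(M_n)$ is an abelian C$^*$-algebra with respect to the product $a\ast b=\phi(ab)$ for $a,b\in\phi(M_n)$ (with the involution and norm inherited from $M_n$).
   Context: $M_n$ denotes the $n\times n$ complex matrices. A linear map is completely positive (CP) if $\phi\otimes \mathrm{id}_k$ is positive for all $k$. A CP map $\phi: M_n\to M_n$ is PPT if $T\circ\phi$ is CP, where $T$ is the transpose map on $M_n$. It is known (Choi–Effros) that the range of an idempotent unital CP map is a C$^*$-algebra under the product $a\ast b=\phi(ab)$. *)

theory Defs
  imports "Jordan_Normal_Form.Schur_Decomposition"
begin

definition psd_mat :: "nat \<Rightarrow> complex mat \<Rightarrow> bool" where
  "psd_mat m A \<longleftrightarrow> A \<in> carrier_mat m m \<and>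
     (\<exists>B \<in> carrier_mat m m. A = mat_adjoint B * B)"

definition lin_map_on :: "nat \<Rightarrow> (complex mat \<Rightarrow> complex mat) \<Rightarrow> bool" where
  "lin_map_on n \<phi> \<longleftrightarrow>
     (\<forall>A \<in> carrier_mat n n. \<phi> A \<in> carrier_mat n n) \<and>
     (\<forall>A \<in> carrier_mat n n. \<forall>B \<in> carrier_mat n n. \<phi> (A + B) = \<phi> A + \<phi> B) \<and>
     (\<forall>A \<in> carrier_mat n n. \<forall>c. \<phi> (c \<cdot>\<^sub>m A) = c \<cdot>\<^sub>m \<phi> A)"

definition block_of :: "nat \<Rightarrow> complex mat \<Rightarrow> nat \<Rightarrow> nat \<Rightarrow> complex mat" where
  "block_of n X p q = mat n n (\<lambda>(a,b). X $$ (p*n + a, q*n + b))"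

(* (id_k \<otimes> \<phi>) on M_k(M_n) = M_k \<otimes> M_n: apply \<phi> to each n x n block. *)
definition ampl :: "nat \<Rightarrow> nat \<Rightarrow> (complex mat \<Rightarrow> complex mat) \<Rightarrow> complex mat \<Rightarrow> complex mat" where
  "ampl n k \<phi> X = mat (k*n) (k*n)
     (\<lambda>(i,j). \<phi> (block_of n X (i div n) (j div n)) $$ (i mod n, j mod n))"

definition positive_map :: "nat \<Rightarrow> (complex mat \<Rightarrow> complex mat) \<Rightarrow> bool" where
  "positive_map n \<phi> \<longleftrightarrow> (\<forall>A. psd_mat n A \<longrightarrow> psd_mat n (\<phi> A))"

definition completely_positive :: "nat \<Rightarrow> (complex mat \<Rightarrow> complex mat) \<Rightarrow> bool" where
  "completely_positive n \<phi> \<longleftrightarrow> lin_map_on n \<phi> \<and>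
     (\<forall>k. \<forall>X. psd_mat (k*n) X \<longrightarrow> psd_mat (k*n) (ampl n k \<phi> X))"

definition PPT_map :: "nat \<Rightarrow> (complex mat \<Rightarrow> complex mat) \<Rightarrow> bool" where
  "PPT_map n \<phi> \<longleftrightarrow> completely_positive n \<phi> \<and> completely_positive n (transpose_mat \<circ> \<phi>)"

definition unital_map :: "nat \<Rightarrow> (complex mat \<Rightarrow> complex mat) \<Rightarrow> bool" where
  "unital_map n \<phi> \<longleftrightarrow> \<phi> (1\<^sub>m n) = 1\<^sub>m n"

definition vec_norm :: "complex vec \<Rightarrow> real" where
  "vec_norm v = sqrt (\<Sum>i<dim_vec v. (cmod (v $ i))^2)"

definition op_norm :: "complex mat \<Rightarrow> real" where
  "op_norm A = Sup {vec_norm (A *\<^sub>v v) | v. v \<in> carrier_vec (dim_col A) \<and> vec_norm v \<le> 1}"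

definition is_Cstar_algebra ::
  "nat \<Rightarrow> complex mat set \<Rightarrow> (complex mat \<Rightarrow> complex mat \<Rightarrow> complex mat) \<Rightarrow> bool" where
  "is_Cstar_algebra n S prd \<longleftrightarrow>
     S \<subseteq> carrier_mat n n \<and>
     0\<^sub>m n n \<in> S \<and>
     (\<forall>a\<in>S. \<forall>b\<in>S. a + b \<in> S) \<and>
     (\<forall>a\<in>S. \<forall>c. c \<cdot>\<^sub>m a \<in> S) \<and>
     (\<forall>a\<in>S. \<forall>b\<in>S. prd a b \<in> S) \<and>
     (\<forall>a\<in>S. \<forall>b\<in>S. \<forall>c\<in>S. prd (prd a b) c = prd a (prd b c)) \<and>
     (\<forall>a\<in>S. \<forall>b\<in>S. \<forall>c\<in>S. prd a (b + c) = prd a b + prd a c \<and>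
                              prd (a + b) c = prd a c + prd b c) \<and>
     (\<forall>a\<in>S. \<forall>b\<in>S. \<forall>z. prd (z \<cdot>\<^sub>m a) b = z \<cdot>\<^sub>m prd a b \<and>
                         prd a (z \<cdot>\<^sub>m b) = z \<cdot>\<^sub>m prd a b) \<and>
     (\<forall>a\<in>S. mat_adjoint a \<in> S) \<and>
     (\<forall>a\<in>S. \<forall>b\<in>S. mat_adjoint (prd a b) = prd (mat_adjoint b) (mat_adjoint a)) \<and>
     (\<forall>a\<in>S. \<forall>b\<in>S. op_norm (prd a b) \<le> op_norm a * op_norm b) \<and>
     (\<forall>a\<in>S. op_norm (prd (mat_adjoint a) a) = (op_norm a)^2) \<and>
     (\<forall>f. (\<forall>m. f m \<in> S) \<and> (\<forall>e>0. \<exists>N. \<forall>p\<ge>N. \<forall>q\<ge>N. op_norm (f p - f q) < e) \<longrightarrow>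
          (\<exists>L\<in>S. (\<lambda>m. op_norm (f m - L)) \<longlonglongrightarrow> 0))"

definition is_abelian :: "complex mat set \<Rightarrow> (complex mat \<Rightarrow> complex mat \<Rightarrow> complex mat) \<Rightarrow> bool" where
  "is_abelian S prd \<longleftrightarrow> (\<forall>a\<in>S. \<forall>b\<in>S. prd a b = prd b a)"

end

(*
  A unital 2-positive map is self-adjoint and satisfies the Kadison-Schwarz inequality
  phi(x^* x) >= phi(x)^* phi(x); since T o phi is 2-positive as well, also
  phi(x^* x) >= phi(x) phi(x)^* . For a = phi(a) in the range, pushing both inequalities
  through the idempotent positive map phi shows that a^* a and a a^* have the same image
  under phi, and polarizing this identity yields phi(a b) = phi(b a) on the range.

  That the range is a C*-algebra is the Choi-Effros argument: the Schwarz inequality shows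
  phi(k y) = phi(y k) = 0 whenever phi(k) = 0 and y is in the range, which makes the product
  associative; contractivity of phi gives the norm axioms, and the range is closed because it
  is the fixed-point set of the continuous map phi.
*)
theory Submission
  imports Defs "HOL-Analysis.Convex"
begin

section \<open>Adjoints, inner products and norms\<close>

lemma dim_mat_adjoint[simp]:
  "dim_row (mat_adjoint A) = dim_col A" "dim_col (mat_adjoint A) = dim_row A"
  by (auto simp: mat_adjoint_def mat_of_rows_def)

lemma index_mat_adjoint[simp]:
  "i < dim_col A \<Longrightarrow> j < dim_row A \<Longrightarrow> mat_adjoint A $$ (i,j) = cnj (A $$ (j,i))"
  by (auto simp: mat_adjoint_def mat_of_rows_def)

lemma mat_adjoint_carrier[simp]: "A \<in> carrier_mat m n \<Longrightarrow> mat_adjoint A \<in> carrier_mat n m"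
  by (intro carrier_matI) (simp_all add: carrier_matD)

lemma mat_adjoint_adjoint[simp]: "mat_adjoint (mat_adjoint (A::complex mat)) = A"
  by (rule eq_matI, auto)

lemma mat_adjoint_mult:
  "(A::complex mat) \<in> carrier_mat m k \<Longrightarrow> B \<in> carrier_mat k n \<Longrightarrow>
   mat_adjoint (A * B) = mat_adjoint B * mat_adjoint A"
  by (rule eq_matI, auto simp: scalar_prod_def sum_distrib_left mult.commute intro!: sum.cong)

lemma mat_adjoint_add:
  "(A::complex mat) \<in> carrier_mat m n \<Longrightarrow> B \<in> carrier_mat m n \<Longrightarrow>
   mat_adjoint (A + B) = mat_adjoint A + mat_adjoint B"
  by (rule eq_matI, auto)

lemma mat_adjoint_smult: "mat_adjoint (c \<cdot>\<^sub>m (A::complex mat)) = cnj c \<cdot>\<^sub>m mat_adjoint A"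
  by (rule eq_matI, auto)

lemma mat_adjoint_zero[simp]: "mat_adjoint (0\<^sub>m m n) = (0\<^sub>m n m :: complex mat)"
  by (rule eq_matI, auto)

lemma mat_adjoint_four_block:
  "(A::complex mat) \<in> carrier_mat m1 n1 \<Longrightarrow> B \<in> carrier_mat m1 n2 \<Longrightarrow> C \<in> carrier_mat m2 n1 \<Longrightarrow>
   D \<in> carrier_mat m2 n2 \<Longrightarrow>
   mat_adjoint (four_block_mat A B C D) =
     four_block_mat (mat_adjoint A) (mat_adjoint C) (mat_adjoint B) (mat_adjoint D)"
  by (rule eq_matI, auto)

lemma smult_smult_mat: "(a::'a::semigroup_mult) \<cdot>\<^sub>m (b \<cdot>\<^sub>m A) = (a * b) \<cdot>\<^sub>m A"
  by (rule eq_matI) (auto simp: mult.assoc)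

lemma mat_eq_if_minus_eq_0:
  assumes "M \<in> carrier_mat m n" "N \<in> carrier_mat m n" "M - N = 0\<^sub>m m n"
  shows "M = (N :: 'a::ab_group_add mat)"
proof (rule eq_matI)
  fix i j assume ij: "i < dim_row N" "j < dim_col N"
  have "M $$ (i,j) - N $$ (i,j) = (M - N) $$ (i,j)" using ij assms(1,2) by simp
  also have "\<dots> = 0" using ij assms by simp
  finally show "M $$ (i,j) = N $$ (i,j)" by simp
qed (use assms in auto)

lemma adjoint_mult_self_add_smult_adjoint:
  assumes y: "y \<in> carrier_mat n n" and k: "k \<in> carrier_mat n n"
  shows "mat_adjoint (y + s \<cdot>\<^sub>m mat_adjoint k) * (y + s \<cdot>\<^sub>m mat_adjoint k) =
    (mat_adjoint y * y + cnj s \<cdot>\<^sub>m (k * y)) +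
    (s \<cdot>\<^sub>m (mat_adjoint y * mat_adjoint k) + (cnj s * s) \<cdot>\<^sub>m (k * mat_adjoint k))"
proof -
  have Y': "mat_adjoint y \<in> carrier_mat n n" and K': "mat_adjoint k \<in> carrier_mat n n"
    and sk: "s \<cdot>\<^sub>m mat_adjoint k \<in> carrier_mat n n" and ck: "cnj s \<cdot>\<^sub>m k \<in> carrier_mat n n"
    using y k by auto
  have "mat_adjoint (y + s \<cdot>\<^sub>m mat_adjoint k) = mat_adjoint y + cnj s \<cdot>\<^sub>m k"
    unfolding mat_adjoint_add[OF y sk] mat_adjoint_smult by simp
  then have "mat_adjoint (y + s \<cdot>\<^sub>m mat_adjoint k) * (y + s \<cdot>\<^sub>m mat_adjoint k) =
      (mat_adjoint y + cnj s \<cdot>\<^sub>m k) * y + (mat_adjoint y + cnj s \<cdot>\<^sub>m k) * (s \<cdot>\<^sub>m mat_adjoint k)"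
    using mult_add_distrib_mat[OF add_carrier_mat[OF ck] y sk] by simp
  also have "(mat_adjoint y + cnj s \<cdot>\<^sub>m k) * y = mat_adjoint y * y + cnj s \<cdot>\<^sub>m (k * y)"
    unfolding add_mult_distrib_mat[OF Y' ck y] mult_smult_assoc_mat[OF k y] ..
  also have "(mat_adjoint y + cnj s \<cdot>\<^sub>m k) * (s \<cdot>\<^sub>m mat_adjoint k) =
      s \<cdot>\<^sub>m (mat_adjoint y * mat_adjoint k) + (cnj s * s) \<cdot>\<^sub>m (k * mat_adjoint k)"
    unfolding add_mult_distrib_mat[OF Y' ck sk] mult_smult_distrib[OF Y' K']
      mult_smult_assoc_mat[OF k sk] mult_smult_distrib[OF k K'] smult_smult_mat ..
  finally show ?thesis .
qed

lemma mult_mat_vec_index: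
  "A \<in> carrier_mat m n \<Longrightarrow> v \<in> carrier_vec n \<Longrightarrow> i < m \<Longrightarrow>
   (A *\<^sub>v v) $ i = (\<Sum>j<n. A $$ (i,j) * v $ j)"
  by (simp add: scalar_prod_def atLeast0LessThan)

lemma smult_mat_mult_vec:
  "A \<in> carrier_mat m n \<Longrightarrow> v \<in> carrier_vec n \<Longrightarrow> (c \<cdot>\<^sub>m A) *\<^sub>v v = c \<cdot>\<^sub>v (A *\<^sub>v v)"
  by (intro eq_vecI) (auto intro: smult_scalar_prod_distrib[of _ n])

lemma index_mat_adjoint_mult_self:
  "B \<in> carrier_mat m N \<Longrightarrow> i < N \<Longrightarrow> j < N \<Longrightarrow>
   (mat_adjoint B * B) $$ (i,j) = (\<Sum>k<m. cnj (B $$ (k,i)) * B $$ (k,j))"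
  by (simp add: scalar_prod_def atLeast0LessThan)

lemma mult_mat_unit_vec_index:
  "(A::'a::semiring_1 mat) \<in> carrier_mat m n \<Longrightarrow> j < n \<Longrightarrow> i < m \<Longrightarrow>
   (A *\<^sub>v unit_vec n j) $ i = A $$ (i,j)"
  using scalar_prod_right_unit[of j n "row A i"] by simp

definition cinner :: "complex vec \<Rightarrow> complex vec \<Rightarrow> complex" where
  "cinner u v = (\<Sum>i<dim_vec v. cnj (u $ i) * v $ i)"

lemma cinner_eq_scalar_prod: "dim_vec u = dim_vec v \<Longrightarrow> cinner u v = conjugate u \<bullet> v"
  by (auto simp: cinner_def scalar_prod_def atLeast0LessThan)

lemma cinner_adjoint:
  assumes "A \<in> carrier_mat m n" "u \<in> carrier_vec m" "v \<in> carrier_vec n"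
  shows "cinner u (A *\<^sub>v v) = cinner (mat_adjoint A *\<^sub>v u) v"
proof -
  have "cinner u (A *\<^sub>v v) = (\<Sum>i<m. \<Sum>j<n. cnj (u $ i) * (A $$ (i,j) * v $ j))"
    using assms by (auto simp: cinner_def scalar_prod_def sum_distrib_left atLeast0LessThan)
  also have "\<dots> = (\<Sum>j<n. \<Sum>i<m. cnj (u $ i) * (A $$ (i,j) * v $ j))"
    by (rule sum.swap)
  also have "\<dots> = (\<Sum>j<n. (\<Sum>i<m. A $$ (i,j) * cnj (u $ i)) * v $ j)"
    unfolding sum_distrib_right
    by (intro sum.cong refl, simp only: mult.assoc mult.commute mult.left_commute)
  also have "\<dots> = (\<Sum>j<n. cnj ((mat_adjoint A *\<^sub>v u) $ j) * v $ j)"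
    using assms by (intro sum.cong refl) (simp add: scalar_prod_def atLeast0LessThan cnj_sum)
  also have "\<dots> = cinner (mat_adjoint A *\<^sub>v u) v"
    using assms by (simp add: cinner_def)
  finally show ?thesis .
qed

lemma cinner_add_right:
  "u \<in> carrier_vec n \<Longrightarrow> v \<in> carrier_vec n \<Longrightarrow> w \<in> carrier_vec n \<Longrightarrow>
   cinner u (v + w) = cinner u v + cinner u w"
  by (simp add: cinner_def sum.distrib distrib_left)

lemma cinner_add_left:
  "u \<in> carrier_vec n \<Longrightarrow> v \<in> carrier_vec n \<Longrightarrow> w \<in> carrier_vec n \<Longrightarrow>
   cinner (v + w) u = cinner v u + cinner w u"
  by (simp add: cinner_def sum.distrib distrib_right)

lemma cinner_minus_right:
  "u \<in> carrier_vec n \<Longrightarrow> v \<in> carrier_vec n \<Longrightarrow> w \<in> carrier_vec n \<Longrightarrow>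
   cinner u (v - w) = cinner u v - cinner u w"
  by (simp add: cinner_def sum_subtractf right_diff_distrib)

lemma cinner_smult_right: "cinner u (c \<cdot>\<^sub>v v) = c * cinner u v"
  by (simp add: cinner_def sum_distrib_left mult.left_commute)

lemma cinner_smult_left:
  "u \<in> carrier_vec n \<Longrightarrow> v \<in> carrier_vec n \<Longrightarrow> cinner (c \<cdot>\<^sub>v u) v = cnj c * cinner u v"
  by (auto simp: cinner_def sum_distrib_left mult.assoc intro!: sum.cong)

lemma cinner_zero_right[simp]: "cinner u (0\<^sub>v n) = 0"
  by (auto simp: cinner_def)

lemma cnj_cinner: "u \<in> carrier_vec n \<Longrightarrow> v \<in> carrier_vec n \<Longrightarrow> cnj (cinner u v) = cinner v u"
  by (auto simp: cinner_def mult.commute)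

lemma cinner_append:
  assumes "u1 \<in> carrier_vec n1" "v1 \<in> carrier_vec n1" "u2 \<in> carrier_vec n2" "v2 \<in> carrier_vec n2"
  shows "cinner (u1 @\<^sub>v u2) (v1 @\<^sub>v v2) = cinner u1 v1 + cinner u2 v2"
proof -
  have "conjugate (u1 @\<^sub>v u2) = conjugate u1 @\<^sub>v conjugate u2"
    by (rule eq_vecI, auto simp: append_vec_def Let_def)
  then show ?thesis
    using assms by (subst (1 2 3) cinner_eq_scalar_prod) (auto intro!: scalar_prod_append)
qed

lemma cinner_unit_vec_left:
  assumes "i < n" "w \<in> carrier_vec n"
  shows "cinner (unit_vec n i) w = w $ i"
proof -
  have "conjugate (unit_vec n i) = (unit_vec n i :: complex vec)"
    by (rule eq_vecI) (auto simp: unit_vec_def)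
  then show ?thesis using assms by (subst cinner_eq_scalar_prod) auto
qed

lemma cinner_unit_vec_mult_mat:
  "(A::complex mat) \<in> carrier_mat m n \<Longrightarrow> j < n \<Longrightarrow> i < m \<Longrightarrow>
   cinner (unit_vec m i) (A *\<^sub>v unit_vec n j) = A $$ (i,j)"
  by (simp add: cinner_unit_vec_left mult_mat_unit_vec_index)

lemma vec_norm_nonneg: "vec_norm v \<ge> 0"
  by (simp add: vec_norm_def sum_nonneg)

lemma vec_norm_power2: "(vec_norm v)^2 = (\<Sum>i<dim_vec v. (cmod (v $ i))^2)"
  by (simp add: vec_norm_def sum_nonneg)

lemma vec_norm_zero_vec[simp]: "vec_norm (0\<^sub>v n) = 0"
  by (simp add: vec_norm_def)

lemma cinner_self: "cinner v v = of_real ((vec_norm v)^2)"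
  unfolding vec_norm_power2 cinner_def of_real_sum
  by (intro sum.cong refl, metis complex_norm_square mult.commute complex_mult_cnj)

lemma vec_norm_power2_cinner: "(vec_norm v)^2 = Re (cinner v v)"
  by (simp add: cinner_self)

lemma vec_norm_eq_0_imp_zero: assumes "vec_norm v = 0" shows "v = 0\<^sub>v (dim_vec v)"
proof -
  have "(\<Sum>i<dim_vec v. (cmod (v $ i))^2) = 0" using assms vec_norm_power2[of v] by simp
  then have "\<forall>i\<in>{..<dim_vec v}. (cmod (v $ i))^2 = 0"
    by (subst sum_nonneg_eq_0_iff[symmetric]) auto
  then show ?thesis by (intro eq_vecI) auto
qed

lemma vec_norm_smult: "vec_norm (c \<cdot>\<^sub>v v) = cmod c * vec_norm v"
proof -
  have "(vec_norm (c \<cdot>\<^sub>v v))^2 = (cmod c * vec_norm v)^2"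
    unfolding vec_norm_power2 power_mult_distrib
    by (simp add: sum_distrib_left norm_mult power_mult_distrib)
  then show ?thesis
    by (metis mult_nonneg_nonneg norm_ge_zero power2_eq_iff_nonneg vec_norm_nonneg)
qed

lemma norm_index_le_vec_norm: "i < dim_vec w \<Longrightarrow> cmod (w $ i) \<le> vec_norm w"
  using member_le_sum[of i "{..<dim_vec w}" "\<lambda>k. (cmod (w $ k))^2"]
  by (intro power2_le_imp_le[OF _ vec_norm_nonneg]) (simp add: vec_norm_power2)

lemma vec_norm_unit_vec: "j < n \<Longrightarrow> vec_norm (unit_vec n j) = 1"
proof -
  assume j: "j < n"
  have "(\<Sum>k<n. (cmod (unit_vec n j $ k))^2) = (\<Sum>k<n. if k = j then 1 else 0)"
    by (rule sum.cong) (use j in auto)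
  also have "\<dots> = 1" using j by simp
  finally show ?thesis unfolding vec_norm_def by simp
qed

lemma cinner_Cauchy_Schwarz:
  assumes "dim_vec u = dim_vec v"
  shows "cmod (cinner u v) \<le> vec_norm u * vec_norm v"
proof -
  have "cmod (cinner u v) \<le> (\<Sum>i<dim_vec v. cmod (u $ i) * cmod (v $ i))"
    unfolding cinner_def by (rule order.trans[OF norm_sum]) (simp add: norm_mult)
  also have "\<dots> \<le> sqrt ((\<Sum>i<dim_vec v. (cmod (u $ i))^2) * (\<Sum>i<dim_vec v. (cmod (v $ i))^2))"
    by (rule real_le_rsqrt, rule Cauchy_Schwarz_ineq_sum)
  also have "\<dots> = vec_norm u * vec_norm v"
    using assms by (simp add: vec_norm_def real_sqrt_mult)
  finally show ?thesis .
qed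

lemma vec_norm_triangle:
  assumes "u \<in> carrier_vec n" "v \<in> carrier_vec n"
  shows "vec_norm (u + v) \<le> vec_norm u + vec_norm v"
proof -
  have "(vec_norm (u + v))^2 = Re (cinner u u) + Re (cinner u v) + Re (cinner v u) + Re (cinner v v)"
    using assms by (simp add: vec_norm_power2_cinner cinner_add_left[of _ n] cinner_add_right[of _ n])
  also have "Re (cinner v u) = Re (cinner u v)"
    using cnj_cinner[OF assms, symmetric] by simp
  also have "Re (cinner u v) \<le> vec_norm u * vec_norm v"
    using cinner_Cauchy_Schwarz[of u v] assms complex_Re_le_cmod[of "cinner u v"] by simp
  finally have "(vec_norm (u + v))^2 \<le> (vec_norm u + vec_norm v)^2"
    by (simp add: vec_norm_power2_cinner[symmetric] power2_sum)
  then show ?thesis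
    by (rule power2_le_imp_le) (simp add: vec_norm_nonneg add_nonneg_nonneg)
qed

section \<open>The operator norm\<close>

definition frobenius_norm :: "complex mat \<Rightarrow> real" where
  "frobenius_norm A = sqrt (\<Sum>i<dim_row A. \<Sum>j<dim_col A. (cmod (A $$ (i,j)))^2)"

lemma frobenius_norm_nonneg: "frobenius_norm A \<ge> 0"
  by (simp add: frobenius_norm_def sum_nonneg)

lemma vec_norm_mult_le_frobenius:
  assumes "v \<in> carrier_vec (dim_col A)"
  shows "vec_norm (A *\<^sub>v v) \<le> frobenius_norm A * vec_norm v"
proof -
  have row: "cmod ((A *\<^sub>v v) $ i) ^2 \<le> (\<Sum>j<dim_col A. (cmod (A $$ (i,j)))^2) * (vec_norm v)^2"
    if i: "i < dim_row A" for i
  proof -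
    have "(A *\<^sub>v v) $ i = cinner (conjugate (row A i)) v"
      using i assms by (simp add: cinner_eq_scalar_prod scalar_prod_def)
    then have "cmod ((A *\<^sub>v v) $ i) \<le> vec_norm (conjugate (row A i)) * vec_norm v"
      using assms cinner_Cauchy_Schwarz[of "conjugate (row A i)" v] by simp
    then have "cmod ((A *\<^sub>v v) $ i) ^2 \<le> (vec_norm (conjugate (row A i)))^2 * (vec_norm v)^2"
      by (simp add: power_mono flip: power_mult_distrib)
    also have "(vec_norm (conjugate (row A i)))^2 = (\<Sum>j<dim_col A. (cmod (A $$ (i,j)))^2)"
      using i by (simp add: vec_norm_power2)
    finally show ?thesis .
  qed
  have "(vec_norm (A *\<^sub>v v))^2 = (\<Sum>i<dim_row A. cmod ((A *\<^sub>v v) $ i) ^2)"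
    by (simp add: vec_norm_power2)
  also have "\<dots> \<le> (\<Sum>i<dim_row A. (\<Sum>j<dim_col A. (cmod (A $$ (i,j)))^2) * (vec_norm v)^2)"
    by (rule sum_mono, rule row, simp)
  also have "\<dots> = (frobenius_norm A * vec_norm v)^2"
    unfolding frobenius_norm_def power_mult_distrib sum_distrib_right[symmetric]
    by (simp add: sum_nonneg)
  finally show ?thesis
    by (rule power2_le_imp_le) (simp add: frobenius_norm_nonneg vec_norm_nonneg)
qed

definition op_norm_values :: "complex mat \<Rightarrow> real set" where
  "op_norm_values A = {vec_norm (A *\<^sub>v v) | v. v \<in> carrier_vec (dim_col A) \<and> vec_norm v \<le> 1}"

lemma op_norm_eq_Sup: "op_norm A = Sup (op_norm_values A)"
  by (simp add: op_norm_def op_norm_values_def)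

lemma zero_in_op_norm_values: "vec_norm (A *\<^sub>v 0\<^sub>v (dim_col A)) \<in> op_norm_values A"
  unfolding op_norm_values_def by (auto intro!: exI[of _ "0\<^sub>v (dim_col A)"])

lemma bdd_above_op_norm_values: "bdd_above (op_norm_values A)"
  unfolding op_norm_values_def
proof (rule bdd_aboveI[of _ "frobenius_norm A"], clarsimp)
  fix v :: "complex vec" assume "v \<in> carrier_vec (dim_col A)" "vec_norm v \<le> 1"
  then show "vec_norm (A *\<^sub>v v) \<le> frobenius_norm A"
    using vec_norm_mult_le_frobenius[of v A]
      mult_left_le[of "vec_norm v" "frobenius_norm A", OF _ frobenius_norm_nonneg] by simp
qed

lemma op_norm_nonneg: "op_norm A \<ge> 0"
  using cSup_upper[OF zero_in_op_norm_values bdd_above_op_norm_values] vec_norm_nonneg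
  unfolding op_norm_eq_Sup by (meson order_trans)

lemma vec_norm_mult_le_op_norm:
  assumes "v \<in> carrier_vec (dim_col A)"
  shows "vec_norm (A *\<^sub>v v) \<le> op_norm A * vec_norm v"
proof (cases "vec_norm v = 0")
  case True
  then have "v = 0\<^sub>v (dim_col A)" using vec_norm_eq_0_imp_zero[of v] assms by auto
  then have "A *\<^sub>v v = 0\<^sub>v (dim_row A)" by (intro eq_vecI) auto
  then show ?thesis by (simp add: vec_norm_nonneg op_norm_nonneg)
next
  case False
  then have pos: "vec_norm v > 0" using vec_norm_nonneg[of v] by simp
  define w where "w = (1 / of_real (vec_norm v)) \<cdot>\<^sub>v v"
  have "vec_norm w = 1" using pos unfolding w_def vec_norm_smult by (simp add: norm_divide)
  then have "vec_norm (A *\<^sub>v w) \<in> op_norm_values A"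
    unfolding op_norm_values_def using assms w_def by auto
  then have "vec_norm (A *\<^sub>v w) \<le> op_norm A"
    unfolding op_norm_eq_Sup using bdd_above_op_norm_values by (rule cSup_upper)
  moreover have "A *\<^sub>v w = (1 / of_real (vec_norm v)) \<cdot>\<^sub>v (A *\<^sub>v v)"
    unfolding w_def using assms by (intro mult_mat_vec[of A "dim_row A" "dim_col A"]) auto
  then have "vec_norm (A *\<^sub>v w) = vec_norm (A *\<^sub>v v) / vec_norm v"
    using pos by (simp add: vec_norm_smult norm_divide)
  ultimately show ?thesis using pos by (simp add: divide_le_eq mult.commute)
qed

lemma op_norm_leI:
  assumes "c \<ge> 0" "\<And>v. v \<in> carrier_vec (dim_col A) \<Longrightarrow> vec_norm (A *\<^sub>v v) \<le> c * vec_norm v"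
  shows "op_norm A \<le> c"
  unfolding op_norm_eq_Sup
proof (rule cSup_least)
  show "op_norm_values A \<noteq> {}" using zero_in_op_norm_values by blast
  fix x assume "x \<in> op_norm_values A"
  then obtain v where v: "v \<in> carrier_vec (dim_col A)" "vec_norm v \<le> 1" "x = vec_norm (A *\<^sub>v v)"
    unfolding op_norm_values_def by (auto intro!: exI[of _ "0\<^sub>v (dim_col A)"])
  have "vec_norm (A *\<^sub>v v) \<le> c * vec_norm v" by (rule assms(2)[OF v(1)])
  also have "c * vec_norm v \<le> c" by (rule mult_left_le[OF v(2) assms(1)])
  finally show "x \<le> c" using v(3) by simp
qed

lemma op_norm_le_frobenius: "op_norm A \<le> frobenius_norm A"
  by (rule op_norm_leI[OF frobenius_norm_nonneg vec_norm_mult_le_frobenius])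

lemma op_norm_mult:
  assumes A: "A \<in> carrier_mat m k" and B: "B \<in> carrier_mat k n"
  shows "op_norm (A * B) \<le> op_norm A * op_norm B"
proof (rule op_norm_leI)
  show "0 \<le> op_norm A * op_norm B" by (simp add: op_norm_nonneg)
  fix v :: "complex vec" assume "v \<in> carrier_vec (dim_col (A * B))"
  then have v: "v \<in> carrier_vec n" using B by simp
  have Bv: "B *\<^sub>v v \<in> carrier_vec k" using B v by simp
  have "vec_norm ((A * B) *\<^sub>v v) = vec_norm (A *\<^sub>v (B *\<^sub>v v))"
    by (simp only: assoc_mult_mat_vec[OF A B v])
  also have "\<dots> \<le> op_norm A * vec_norm (B *\<^sub>v v)"
    by (rule vec_norm_mult_le_op_norm) (use A Bv in simp)
  also have "\<dots> \<le> op_norm A * (op_norm B * vec_norm v)"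
    by (rule mult_left_mono[OF vec_norm_mult_le_op_norm op_norm_nonneg]) (use B v in simp)
  finally show "vec_norm ((A * B) *\<^sub>v v) \<le> op_norm A * op_norm B * vec_norm v"
    by (simp add: mult.assoc)
qed

lemma op_norm_triangle:
  assumes A: "A \<in> carrier_mat m n" and B: "B \<in> carrier_mat m n"
  shows "op_norm (A + B) \<le> op_norm A + op_norm B"
proof (rule op_norm_leI)
  show "0 \<le> op_norm A + op_norm B" by (simp add: op_norm_nonneg)
  fix v :: "complex vec" assume "v \<in> carrier_vec (dim_col (A + B))"
  then have v: "v \<in> carrier_vec n" using B by simp
  have "vec_norm ((A + B) *\<^sub>v v) = vec_norm (A *\<^sub>v v + B *\<^sub>v v)"
    by (simp only: add_mult_distrib_mat_vec[OF A B v])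
  also have "\<dots> \<le> vec_norm (A *\<^sub>v v) + vec_norm (B *\<^sub>v v)"
    by (rule vec_norm_triangle[OF mult_mat_vec_carrier[OF A v] mult_mat_vec_carrier[OF B v]])
  also have "\<dots> \<le> op_norm A * vec_norm v + op_norm B * vec_norm v"
    by (rule add_mono; rule vec_norm_mult_le_op_norm) (use A B v in simp_all)
  finally show "vec_norm ((A + B) *\<^sub>v v) \<le> (op_norm A + op_norm B) * vec_norm v"
    by (simp add: distrib_right)
qed

lemma op_norm_minus_commute:
  assumes "A \<in> carrier_mat m n" "B \<in> carrier_mat m n"
  shows "op_norm (A - B) = op_norm (B - A)"
proof -
  have "op_norm (A - B) \<le> op_norm (B - A)" if A: "A \<in> carrier_mat m n" and B: "B \<in> carrier_mat m n" for A B
  proof (rule op_norm_leI[OF op_norm_nonneg])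
    fix v :: "complex vec" assume "v \<in> carrier_vec (dim_col (A - B))"
    then have v: "v \<in> carrier_vec n" using B by simp
    have "A - B = (-1) \<cdot>\<^sub>m (B - A)" using A B by (intro eq_matI) auto
    then have "(A - B) *\<^sub>v v = (-1) \<cdot>\<^sub>v ((B - A) *\<^sub>v v)"
      using A B v by (simp add: smult_mat_mult_vec[of _ m n] minus_carrier_mat)
    then show "vec_norm ((A - B) *\<^sub>v v) \<le> op_norm (B - A) * vec_norm v"
      using vec_norm_mult_le_op_norm[of v "B - A"] A v by (simp add: vec_norm_smult)
  qed
  then show ?thesis using assms by (meson antisym)
qed

lemma norm_index_le_op_norm:
  assumes A: "(A::complex mat) \<in> carrier_mat m n" and i: "i < m" and j: "j < n"
  shows "cmod (A $$ (i,j)) \<le> op_norm A"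
proof -
  have "cmod (A $$ (i,j)) = cmod ((A *\<^sub>v unit_vec n j) $ i)"
    using mult_mat_unit_vec_index[OF A j i] by simp
  also have "\<dots> \<le> vec_norm (A *\<^sub>v unit_vec n j)"
    by (rule norm_index_le_vec_norm) (use A i in simp)
  also have "\<dots> \<le> op_norm A * vec_norm (unit_vec n j)"
    by (rule vec_norm_mult_le_op_norm) (use A in simp)
  finally show ?thesis using vec_norm_unit_vec[OF j] by simp
qed

lemma op_norm_le_0_imp_zero:
  assumes A: "(A::complex mat) \<in> carrier_mat m n" and "op_norm A \<le> 0"
  shows "A = 0\<^sub>m m n"
proof (rule eq_matI)
  fix i j assume "i < dim_row (0\<^sub>m m n :: complex mat)" "j < dim_col (0\<^sub>m m n :: complex mat)"
  then have i: "i < m" and j: "j < n" by auto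
  have "cmod (A $$ (i,j)) \<le> 0" using norm_index_le_op_norm[OF A i j] assms(2) by linarith
  then show "A $$ (i,j) = 0\<^sub>m m n $$ (i,j)" using i j by simp
qed (use A in auto)

lemma op_norm_adjoint_le:
  assumes A: "A \<in> carrier_mat m n"
  shows "op_norm (mat_adjoint A) \<le> op_norm A"
proof (rule op_norm_leI)
  show "0 \<le> op_norm A" by (rule op_norm_nonneg)
  fix v :: "complex vec" assume "v \<in> carrier_vec (dim_col (mat_adjoint A))"
  then have v: "v \<in> carrier_vec m" using A by simp
  let ?w = "mat_adjoint A *\<^sub>v v"
  have w: "?w \<in> carrier_vec n" by (rule mult_mat_vec_carrier[OF mat_adjoint_carrier[OF A] v])
  have "(vec_norm ?w)^2 = Re (cinner v (A *\<^sub>v ?w))"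
    unfolding vec_norm_power2_cinner cinner_adjoint[OF A v w] ..
  also have "\<dots> \<le> vec_norm v * vec_norm (A *\<^sub>v ?w)"
    using cinner_Cauchy_Schwarz[of v "A *\<^sub>v ?w"] complex_Re_le_cmod[of "cinner v (A *\<^sub>v ?w)"] A v
    by simp
  also have "\<dots> \<le> vec_norm v * (op_norm A * vec_norm ?w)"
    by (rule mult_left_mono[OF vec_norm_mult_le_op_norm vec_norm_nonneg]) (use A w in simp)
  finally have "vec_norm ?w * vec_norm ?w \<le> (op_norm A * vec_norm v) * vec_norm ?w"
    by (simp add: power2_eq_square algebra_simps)
  then show "vec_norm ?w \<le> op_norm A * vec_norm v"
    using vec_norm_nonneg[of ?w] op_norm_nonneg[of A] vec_norm_nonneg[of v]
    by (cases "vec_norm ?w = 0") auto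
qed

lemma Cauchy_index_if_op_norm_Cauchy:
  assumes F: "\<And>k. f k \<in> carrier_mat m n"
    and C: "\<forall>e>0. \<exists>N. \<forall>p\<ge>N. \<forall>q\<ge>N. op_norm (f p - f q) < e"
    and ij: "i < m" "j < n"
  shows "Cauchy (\<lambda>k. f k $$ (i,j))"
  unfolding Cauchy_def
proof (intro allI impI)
  fix e :: real assume "e > 0"
  then obtain N where N: "\<forall>p\<ge>N. \<forall>q\<ge>N. op_norm (f p - f q) < e" using C by blast
  have "dist (f p $$ (i, j)) (f q $$ (i, j)) < e" if "p \<ge> N" "q \<ge> N" for p q
  proof -
    have "dist (f p $$ (i, j)) (f q $$ (i, j)) = cmod ((f p - f q) $$ (i,j))"
      using F[of p] F[of q] ij by (simp add: dist_complex_def)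
    also have "\<dots> \<le> op_norm (f p - f q)"
      by (rule norm_index_le_op_norm[OF minus_carrier_mat[OF F] ij])
    finally show ?thesis using N that by fastforce
  qed
  then show "\<exists>M. \<forall>p\<ge>M. \<forall>q\<ge>M. dist (f p $$ (i, j)) (f q $$ (i, j)) < e" by blast
qed

text \<open>The operator norm is dominated by the Frobenius norm, so entrywise convergence suffices.\<close>

lemma op_norm_Cauchy_convergent:
  assumes F: "\<And>k. f k \<in> carrier_mat m n"
    and C: "\<forall>e>0. \<exists>N. \<forall>p\<ge>N. \<forall>q\<ge>N. op_norm (f p - f q) < e"
  obtains L where "L \<in> carrier_mat m n" "(\<lambda>k. op_norm (f k - L)) \<longlonglongrightarrow> 0"
proof -
  have entries: "(\<lambda>k. f k $$ (i,j)) \<longlonglongrightarrow> lim (\<lambda>k. f k $$ (i,j))" if "i < m" "j < n" for i j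
    using Cauchy_convergent[OF Cauchy_index_if_op_norm_Cauchy[OF F C that]]
    by (simp add: convergent_LIMSEQ_iff)
  define L where "L = mat m n (\<lambda>(i,j). lim (\<lambda>k. f k $$ (i,j)))"
  have L: "L \<in> carrier_mat m n" unfolding L_def by simp
  have "(\<lambda>k. \<Sum>i<m. \<Sum>j<n. (cmod (f k $$ (i,j) - L $$ (i,j)))^2) \<longlonglongrightarrow> 0"
  proof (intro tendsto_null_sum)
    fix i j assume "i \<in> {..<m}" "j \<in> {..<n}"
    then have "(\<lambda>k. f k $$ (i,j) - L $$ (i,j)) \<longlonglongrightarrow> 0"
      using entries[of i j] by (simp add: L_def LIM_zero)
    then show "(\<lambda>k. (cmod (f k $$ (i,j) - L $$ (i,j)))^2) \<longlonglongrightarrow> 0"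
      using tendsto_power[OF tendsto_norm_zero, of _ _ 2] by simp
  qed
  moreover have "frobenius_norm (f k - L) = sqrt (\<Sum>i<m. \<Sum>j<n. (cmod (f k $$ (i,j) - L $$ (i,j)))^2)" for k
    unfolding frobenius_norm_def using F[of k] L by (intro arg_cong[where f=sqrt] sum.cong refl) auto
  ultimately have frobenius_lim: "(\<lambda>k. frobenius_norm (f k - L)) \<longlonglongrightarrow> 0"
    using tendsto_real_sqrt by fastforce
  have "(\<lambda>k. op_norm (f k - L)) \<longlonglongrightarrow> 0"
    by (rule tendsto_sandwich[OF _ _ tendsto_const frobenius_lim])
      (auto simp: op_norm_nonneg op_norm_le_frobenius)
  with L show ?thesis by (rule that)
qed

section \<open>Quadratic forms and positive semidefiniteness\<close>

definition qform :: "complex mat \<Rightarrow> complex vec \<Rightarrow> complex" where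
  "qform M v = cinner v (M *\<^sub>v v)"

definition qform_pos :: "nat \<Rightarrow> complex mat \<Rightarrow> bool" where
  "qform_pos n A \<longleftrightarrow> A \<in> carrier_mat n n \<and> (\<forall>v\<in>carrier_vec n. 0 \<le> qform A v)"

lemma complex_nonneg_iff: "(0::complex) \<le> z \<longleftrightarrow> Im z = 0 \<and> Re z \<ge> 0"
  by (auto simp: less_eq_complex_def)

lemma complex_eq_0_if_quadratic_nonneg:
  fixes \<beta> \<kappa> :: complex
  assumes H: "\<And>s. 0 \<le> s * cnj \<beta> + cnj s * \<beta> + cnj s * s * \<kappa>" and k: "0 \<le> \<kappa>"
  shows "\<beta> = 0"
proof (rule ccontr)
  assume nz: "\<beta> \<noteq> 0"
  define K where "K = Re \<kappa>"
  have K: "K \<ge> 0" and kK: "\<kappa> = of_real K" using k by (auto simp: K_def complex_nonneg_iff complex_eq_iff)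
  define r where "r = 1 / (K + 1)"
  have r: "r > 0" and rK: "r * K < 1" using K by (simp_all add: r_def field_simps)
  define b where "b = (cmod \<beta>)^2"
  have b: "b > 0" using nz by (simp add: b_def)
  have bb: "\<beta> * cnj \<beta> = of_real b" unfolding b_def by (rule complex_norm_square[symmetric])
  define s where "s = - of_real r * \<beta>"
  have "s * cnj \<beta> + cnj s * \<beta> + cnj s * s * \<kappa> = of_real (- 2 * r * b + r * r * b * K)"
    unfolding s_def kK by (simp add: bb[symmetric] algebra_simps)
  then have ge: "0 \<le> - 2 * r * b + r * r * b * K" using H[of s] by (simp add: complex_nonneg_iff)
  have "(r * b) * (r * K) < (r * b) * 1" by (rule mult_strict_left_mono[OF rK]) (use r b in simp)
  with ge r b show False by (simp add: algebra_simps)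
qed

lemma qform_sum:
  "M \<in> carrier_mat n n \<Longrightarrow> v \<in> carrier_vec n \<Longrightarrow>
   qform M v = (\<Sum>i<n. cnj (v $ i) * (\<Sum>j<n. M $$ (i,j) * v $ j))"
  unfolding qform_def cinner_def using mult_mat_vec_index[of M n n v] by simp

lemma qform_add_smult_vec:
  assumes M: "M \<in> carrier_mat n n" and ab: "a \<in> carrier_vec n" "b \<in> carrier_vec n"
  shows "qform M (a + c \<cdot>\<^sub>v b) =
    qform M a + c * cinner a (M *\<^sub>v b) + cnj c * cinner b (M *\<^sub>v a) + cnj c * c * qform M b"
proof -
  have "M *\<^sub>v (a + c \<cdot>\<^sub>v b) = M *\<^sub>v a + c \<cdot>\<^sub>v (M *\<^sub>v b)"
    using M ab by (simp add: mult_add_distrib_mat_vec mult_mat_vec)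
  then show ?thesis
    unfolding qform_def using M ab
    by (simp add: cinner_add_left[of _ n] cinner_add_right[of _ n] cinner_smult_left[of _ n]
        cinner_smult_right algebra_simps)
qed

lemma mat_eq_0_if_qform_eq_0:
  assumes M: "M \<in> carrier_mat n n" and Z: "\<And>v. v \<in> carrier_vec n \<Longrightarrow> qform M v = 0"
  shows "M = 0\<^sub>m n n"
proof (rule eq_matI)
  fix i j assume "i < dim_row (0\<^sub>m n n :: complex mat)" "j < dim_col (0\<^sub>m n n :: complex mat)"
  then have i: "i < n" and j: "j < n" by auto
  let ?a = "unit_vec n i" and ?b = "unit_vec n j"
  let ?x = "cinner ?a (M *\<^sub>v ?b)" and ?y = "cinner ?b (M *\<^sub>v ?a)"
  have a: "?a \<in> carrier_vec n" and b: "?b \<in> carrier_vec n" by auto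
  have "?x + ?y = 0"
    using qform_add_smult_vec[OF M a b, of 1] Z[of "?a + 1 \<cdot>\<^sub>v ?b"] Z[OF a] Z[OF b] a b by simp
  moreover have "\<i> * (?x - ?y) = 0"
    using qform_add_smult_vec[OF M a b, of \<i>] Z[of "?a + \<i> \<cdot>\<^sub>v ?b"] Z[OF a] Z[OF b] a b
    by (simp add: right_diff_distrib)
  ultimately have "?x = 0" by (simp add: algebra_simps)
  then show "M $$ (i, j) = 0\<^sub>m n n $$ (i, j)" using cinner_unit_vec_mult_mat[OF M j i] i j by simp
qed (use M in auto)

lemma qform_adjoint:
  assumes "M \<in> carrier_mat n n" "v \<in> carrier_vec n"
  shows "qform (mat_adjoint M) v = cnj (qform M v)"
  unfolding qform_def using assms
  by (simp add: cinner_adjoint[of "mat_adjoint M" n n] cnj_cinner[of _ n])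

lemma qform_add:
  assumes "M \<in> carrier_mat n n" "N \<in> carrier_mat n n" "v \<in> carrier_vec n"
  shows "qform (M + N) v = qform M v + qform N v"
  unfolding qform_def using assms by (simp add: add_mult_distrib_mat_vec cinner_add_right[of _ n])

lemma qform_minus:
  assumes "M \<in> carrier_mat n n" "N \<in> carrier_mat n n" "v \<in> carrier_vec n"
  shows "qform (M - N) v = qform M v - qform N v"
  unfolding qform_def using assms by (simp add: minus_mult_distrib_mat_vec cinner_minus_right[of _ n])

lemma qform_smult:
  assumes "M \<in> carrier_mat n n" "v \<in> carrier_vec n"
  shows "qform (c \<cdot>\<^sub>m M) v = c * qform M v"
  unfolding qform_def smult_mat_mult_vec[OF assms] by (simp add: cinner_smult_right)

lemma qform_one: "v \<in> carrier_vec n \<Longrightarrow> qform (1\<^sub>m n) v = of_real ((vec_norm v)^2)"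
  unfolding qform_def by (simp add: cinner_self)

lemma qform_adjoint_mult_self:
  assumes B: "B \<in> carrier_mat m n" and v: "v \<in> carrier_vec n"
  shows "qform (mat_adjoint B * B) v = of_real ((vec_norm (B *\<^sub>v v))^2)"
proof -
  have "(mat_adjoint B * B) *\<^sub>v v = mat_adjoint B *\<^sub>v (B *\<^sub>v v)"
    using B v by (simp add: assoc_mult_mat_vec[of _ n m _ n])
  then show ?thesis
    unfolding qform_def using B v by (simp add: cinner_adjoint[of "mat_adjoint B" n m] cinner_self)
qed

lemma qform_transpose:
  assumes M: "M \<in> carrier_mat n n" and v: "v \<in> carrier_vec n"
  shows "qform (transpose_mat M) v = qform M (conjugate v)"
proof -
  have "qform (transpose_mat M) v = (\<Sum>i<n. \<Sum>j<n. cnj (v $ i) * (M $$ (j,i) * v $ j))"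
    unfolding qform_sum[OF transpose_carrier_mat[THEN iffD2, OF M] v] sum_distrib_left
    using M by (intro sum.cong refl) auto
  also have "\<dots> = (\<Sum>j<n. \<Sum>i<n. cnj (v $ i) * (M $$ (j,i) * v $ j))" by (rule sum.swap)
  also have "\<dots> = qform M (conjugate v)"
    unfolding qform_sum[OF M carrier_vec_conjugate[OF v]] sum_distrib_left
    using v by (intro sum.cong refl) (simp add: mult.commute mult.left_commute)
  finally show ?thesis .
qed

lemma hermitian_if_qform_real:
  assumes M: "M \<in> carrier_mat n n" and R: "\<And>v. v \<in> carrier_vec n \<Longrightarrow> Im (qform M v) = 0"
  shows "mat_adjoint M = M"
proof -
  have "M - mat_adjoint M = 0\<^sub>m n n"
  proof (rule mat_eq_0_if_qform_eq_0)
    fix v :: "complex vec" assume v: "v \<in> carrier_vec n"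
    have "qform (M - mat_adjoint M) v = qform M v - cnj (qform M v)"
      using M v by (simp add: qform_minus[of _ n] qform_adjoint)
    then show "qform (M - mat_adjoint M) v = 0" using R[OF v] by (simp add: complex_eq_iff)
  qed (use M in \<open>simp add: minus_carrier_mat\<close>)
  then show ?thesis using mat_eq_if_minus_eq_0[of M n n "mat_adjoint M"] M by simp
qed

lemma qform_pos_hermitian: "qform_pos n A \<Longrightarrow> mat_adjoint A = A"
  unfolding qform_pos_def by (intro hermitian_if_qform_real[of _ n]) (auto simp: complex_nonneg_iff)

lemma hermitian_index:
  "mat_adjoint A = A \<Longrightarrow> A \<in> carrier_mat n n \<Longrightarrow> i < n \<Longrightarrow> j < n \<Longrightarrow> A $$ (j,i) = cnj (A $$ (i,j))"
  by (metis index_mat_adjoint carrier_matD(1) carrier_matD(2))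

lemma qform_pos_transpose: "qform_pos n M \<Longrightarrow> qform_pos n (transpose_mat M)"
  unfolding qform_pos_def using qform_transpose by auto

lemma qform_pos_antisym:
  assumes "qform_pos n (M - N)" "qform_pos n (N - M)"
    and M: "M \<in> carrier_mat n n" and N: "N \<in> carrier_mat n n"
  shows "M = N"
proof -
  have "qform (M - N) v = 0" if v: "v \<in> carrier_vec n" for v
  proof -
    have "qform (N - M) v = - qform (M - N) v"
      unfolding qform_minus[OF M N v] qform_minus[OF N M v] by simp
    moreover have "0 \<le> qform (M - N) v" "0 \<le> qform (N - M) v"
      using assms(1,2) v unfolding qform_pos_def by auto
    ultimately show ?thesis by (simp add: complex_nonneg_iff complex_eq_iff)
  qed
  then have "M - N = 0\<^sub>m n n" by (intro mat_eq_0_if_qform_eq_0) (use M N in \<open>simp_all add: minus_carrier_mat\<close>)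
  then show ?thesis by (rule mat_eq_if_minus_eq_0[OF M N])
qed

lemma psd_imp_qform_pos: assumes "psd_mat n A" shows "qform_pos n A"
  using assms unfolding psd_mat_def qform_pos_def
  by (auto simp: qform_adjoint_mult_self complex_nonneg_iff)

lemma qform_pos_zero_row:
  assumes F: "qform_pos n M" and i: "i < n" and j: "j < n" and z: "M $$ (i,i) = 0"
  shows "M $$ (i,j) = 0"
proof (rule ccontr)
  assume nz: "M $$ (i,j) \<noteq> 0"
  have M: "M \<in> carrier_mat n n" using F by (simp add: qform_pos_def)
  let ?p = "M $$ (i,j)"
  let ?a = "unit_vec n j" and ?b = "unit_vec n i"
  define r where "r = (Re (M $$ (j,j)) + 1) / (2 * (cmod ?p)^2)"
  define t where "t = - of_real r * ?p"
  have a: "?a \<in> carrier_vec n" and b: "?b \<in> carrier_vec n" by auto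
  have "0 \<le> qform M (?a + t \<cdot>\<^sub>v ?b)" using F a b unfolding qform_pos_def by simp
  also have "qform M (?a + t \<cdot>\<^sub>v ?b) =
      M $$ (j,j) + t * M $$ (j,i) + cnj t * M $$ (i,j) + cnj t * t * M $$ (i,i)"
    unfolding qform_add_smult_vec[OF M a b] using M i j by (simp add: qform_def cinner_unit_vec_mult_mat)
  also have "M $$ (j,i) = cnj ?p" using hermitian_index[OF qform_pos_hermitian[OF F] M i j] .
  finally have "0 \<le> M $$ (j,j) - of_real (2 * r * (cmod ?p)^2)"
    unfolding t_def z using complex_norm_square by (simp add: algebra_simps)
  moreover have "2 * r * (cmod ?p)^2 = Re (M $$ (j,j)) + 1" using nz unfolding r_def by simp
  ultimately show False by (simp add: complex_nonneg_iff)
qed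

definition Schur_complement :: "complex mat \<Rightarrow> complex mat" where
  "Schur_complement A = mat (dim_row A - 1) (dim_row A - 1)
     (\<lambda>(i,j). A $$ (Suc i, Suc j) - A $$ (Suc i, 0) * A $$ (0, Suc j) / A $$ (0,0))"

lemma Schur_complement_carrier:
  "A \<in> carrier_mat (Suc m) (Suc m) \<Longrightarrow> Schur_complement A \<in> carrier_mat m m"
  by (simp add: Schur_complement_def)

text \<open>The first coordinate of z is chosen to kill the first row of A z; if A_00 = 0 it is 0, and
  the formula stays correct because then x / 0 = 0 in the Schur complement as well.\<close>

lemma qform_Schur_complement:
  assumes A: "A \<in> carrier_mat (Suc m) (Suc m)" and w: "w \<in> carrier_vec m"
  defines "z \<equiv> vec (Suc m) (\<lambda>i. if i = 0 then - (\<Sum>j<m. A $$ (0, Suc j) * w $ j) / A $$ (0,0)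
    else w $ (i - 1))"
  shows "qform A z = qform (Schur_complement A) w"
proof -
  let ?a = "A $$ (0,0)" and ?S = "Schur_complement A"
  define c where "c = (\<Sum>j<m. A $$ (0, Suc j) * w $ j)"
  have z: "z \<in> carrier_vec (Suc m)" by (simp add: z_def)
  have inner: "(\<Sum>j<Suc m. A $$ (i,j) * z $ j) = A $$ (i,0) * (- c / ?a) + (\<Sum>j<m. A $$ (i, Suc j) * w $ j)"
    for i unfolding sum.lessThan_Suc_shift by (simp add: z_def c_def)
  have first_row: "cnj (z $ 0) * (\<Sum>j<Suc m. A $$ (0,j) * z $ j) = 0"
  proof -
    have row0: "(\<Sum>j<Suc m. A $$ (0,j) * z $ j) = ?a * (- c / ?a) + c" unfolding inner by (simp add: c_def)
    have z0: "z $ 0 = - c / ?a" by (simp add: z_def c_def)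
    show ?thesis unfolding row0 z0 by (cases "?a = 0") simp_all
  qed
  have other_rows: "(\<Sum>j<Suc m. A $$ (Suc i,j) * z $ j) = (\<Sum>j<m. ?S $$ (i,j) * w $ j)"
    if i: "i < m" for i
  proof -
    have "(\<Sum>j<m. ?S $$ (i,j) * w $ j) =
        (\<Sum>j<m. A $$ (Suc i, Suc j) * w $ j - A $$ (Suc i, 0) / ?a * (A $$ (0, Suc j) * w $ j))"
      using i A by (intro sum.cong refl) (simp add: Schur_complement_def algebra_simps)
    also have "\<dots> = (\<Sum>j<m. A $$ (Suc i, Suc j) * w $ j) - A $$ (Suc i, 0) / ?a * c"
      unfolding sum_subtractf c_def sum_distrib_left ..
    finally show ?thesis unfolding inner by (simp add: algebra_simps)
  qed
  have "qform A z = cnj (z $ 0) * (\<Sum>j<Suc m. A $$ (0,j) * z $ j) +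
      (\<Sum>i<m. cnj (z $ Suc i) * (\<Sum>j<Suc m. A $$ (Suc i,j) * z $ j))"
    unfolding qform_sum[OF A z] sum.lessThan_Suc_shift ..
  also have "\<dots> = (\<Sum>i<m. cnj (w $ i) * (\<Sum>j<m. ?S $$ (i,j) * w $ j))"
    unfolding first_row add_0_left
  proof (rule sum.cong[OF refl])
    fix i assume "i \<in> {..<m}"
    then have "i < m" and "z $ Suc i = w $ i" by (auto simp: z_def)
    then show "cnj (z $ Suc i) * (\<Sum>j<Suc m. A $$ (Suc i,j) * z $ j) =
        cnj (w $ i) * (\<Sum>j<m. ?S $$ (i,j) * w $ j)"
      by (simp only: other_rows)
  qed
  also have "\<dots> = qform ?S w" by (rule qform_sum[OF Schur_complement_carrier[OF A] w, symmetric])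
  finally show ?thesis .
qed

lemma qform_pos_Schur_complement:
  assumes F: "qform_pos (Suc m) A"
  shows "qform_pos m (Schur_complement A)"
proof -
  have A: "A \<in> carrier_mat (Suc m) (Suc m)" using F by (simp add: qform_pos_def)
  have "0 \<le> qform (Schur_complement A) w" if w: "w \<in> carrier_vec m" for w
  proof -
    let ?z = "vec (Suc m) (\<lambda>i. if i = 0 then - (\<Sum>j<m. A $$ (0, Suc j) * w $ j) / A $$ (0,0)
      else w $ (i - 1))"
    have "0 \<le> qform A ?z" using F unfolding qform_pos_def by simp
    then show ?thesis unfolding qform_Schur_complement[OF A w] .
  qed
  then show ?thesis unfolding qform_pos_def using Schur_complement_carrier[OF A] by blast
qed

text \<open>One step of a Cholesky factorisation: the factor has first row (s, A_0j / s) with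
  s^2 = A_00 (the row vanishes when s = 0) and a factor of the Schur complement below.\<close>

lemma psd_mat_Cholesky_step:
  assumes A: "A \<in> carrier_mat (Suc m) (Suc m)" and H: "mat_adjoint A = A"
    and s: "A $$ (0,0) = of_real s * of_real s"
    and first_row: "s = 0 \<Longrightarrow> \<forall>j<Suc m. A $$ (0,j) = 0"
    and R: "R \<in> carrier_mat m m" and Schur: "Schur_complement A = mat_adjoint R * R"
  shows "psd_mat (Suc m) A"
proof -
  define B where "B = mat (Suc m) (Suc m) (\<lambda>(i,j).
    if i = 0 then (if j = 0 then of_real s else A $$ (0,j) / of_real s)
    else (if j = 0 then 0 else R $$ (i-1,j-1)))"
  have B: "B \<in> carrier_mat (Suc m) (Suc m)" by (simp add: B_def)
  have hA: "A $$ (j,i) = cnj (A $$ (i,j))" if "i < Suc m" "j < Suc m" for i j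
    using hermitian_index[OF H A that] .
  have "A = mat_adjoint B * B"
  proof (rule eq_matI)
    fix i j assume "i < dim_row (mat_adjoint B * B)" "j < dim_col (mat_adjoint B * B)"
    then have i: "i < Suc m" and j: "j < Suc m" using B by auto
    have BB: "(mat_adjoint B * B) $$ (i,j) =
        cnj (B $$ (0,i)) * B $$ (0,j) + (\<Sum>k<m. cnj (B $$ (Suc k,i)) * B $$ (Suc k,j))"
      unfolding index_mat_adjoint_mult_self[OF B i j] sum.lessThan_Suc_shift ..
    show "A $$ (i,j) = (mat_adjoint B * B) $$ (i,j)"
    proof (cases "i = 0 \<or> j = 0")
      case True
      then show ?thesis using BB i j s first_row hA[of 0 i] by (cases "s = 0") (auto simp: B_def)
    next
      case False
      then obtain i' j' where ij': "i = Suc i'" "j = Suc j'" "i' < m" "j' < m"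
        using i j by (metis Suc_less_eq not0_implies_Suc)
      have "(\<Sum>k<m. cnj (B $$ (Suc k,i)) * B $$ (Suc k,j)) = (\<Sum>k<m. cnj (R $$ (k,i')) * R $$ (k,j'))"
        using R ij' by (simp add: B_def)
      also have "\<dots> = Schur_complement A $$ (i', j')"
        unfolding Schur by (rule index_mat_adjoint_mult_self[OF R ij'(3,4), symmetric])
      also have "\<dots> = A $$ (i,j) - cnj (B $$ (0,i)) * B $$ (0,j)"
        using A ij' s hA[of 0 i] by (simp add: Schur_complement_def B_def)
      finally show ?thesis unfolding BB by simp
    qed
  qed (use B A in auto)
  then show ?thesis unfolding psd_mat_def using A B by auto
qed

lemma qform_pos_imp_psd: "qform_pos n A \<Longrightarrow> psd_mat n A"
proof (induction n arbitrary: A)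
  case 0
  then have A: "A \<in> carrier_mat 0 0" by (simp add: qform_pos_def)
  show ?case unfolding psd_mat_def
    by (rule conjI[OF A], rule bexI[of _ "0\<^sub>m 0 0"], rule eq_matI) (use A in auto)
next
  case (Suc m)
  have A: "A \<in> carrier_mat (Suc m) (Suc m)" using Suc.prems by (simp add: qform_pos_def)
  obtain R where R: "R \<in> carrier_mat m m" and Schur: "Schur_complement A = mat_adjoint R * R"
    using Suc.IH[OF qform_pos_Schur_complement[OF Suc.prems]] unfolding psd_mat_def by auto
  have "0 \<le> qform A (unit_vec (Suc m) 0)" using Suc.prems unfolding qform_pos_def by auto
  then have a: "0 \<le> A $$ (0,0)" using cinner_unit_vec_mult_mat[OF A, of 0 0] by (simp add: qform_def)
  define s where "s = sqrt (Re (A $$ (0,0)))"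
  have s: "A $$ (0,0) = of_real s * of_real s"
    using a by (simp add: s_def complex_nonneg_iff complex_eq_iff flip: of_real_mult)
  have "\<forall>j<Suc m. A $$ (0,j) = 0" if "s = 0"
    using qform_pos_zero_row[OF Suc.prems, of 0] s that by simp
  then show ?case
    by (rule psd_mat_Cholesky_step[OF A qform_pos_hermitian[OF Suc.prems] s _ R Schur])
qed

lemma qform_pos_iff_psd: "qform_pos n A \<longleftrightarrow> psd_mat n A"
  using psd_imp_qform_pos qform_pos_imp_psd by blast

section \<open>Unital 2-positive maps\<close>

lemma ampl_1:
  assumes "X \<in> carrier_mat n n" "\<theta> X \<in> carrier_mat n n"
  shows "ampl n 1 \<theta> X = \<theta> X"
proof -
  have "block_of n X 0 0 = X" unfolding block_of_def using assms by (intro eq_matI) auto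
  then show ?thesis unfolding ampl_def using assms by (intro eq_matI) auto
qed

lemma block_of_four_block:
  assumes "A \<in> carrier_mat n n" "B \<in> carrier_mat n n" "C \<in> carrier_mat n n" "D \<in> carrier_mat n n"
  shows "block_of n (four_block_mat A B C D) 0 0 = A" "block_of n (four_block_mat A B C D) 0 (Suc 0) = B"
    "block_of n (four_block_mat A B C D) (Suc 0) 0 = C"
    "block_of n (four_block_mat A B C D) (Suc 0) (Suc 0) = D"
  unfolding block_of_def using assms by (auto intro!: eq_matI)

lemma ampl_2_four_block:
  assumes c: "A \<in> carrier_mat n n" "B \<in> carrier_mat n n" "C \<in> carrier_mat n n" "D \<in> carrier_mat n n"
    and t: "\<theta> A \<in> carrier_mat n n" "\<theta> B \<in> carrier_mat n n" "\<theta> C \<in> carrier_mat n n" "\<theta> D \<in> carrier_mat n n"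
  shows "ampl n 2 \<theta> (four_block_mat A B C D) = four_block_mat (\<theta> A) (\<theta> B) (\<theta> C) (\<theta> D)"
proof (rule eq_matI)
  have block: "i div n = (if i < n then 0 else 1) \<and> i mod n = (if i < n then i else i - n)"
    if "i < 2 * n" for i
    using that le_div_geq[of n i] le_mod_geq[of n i] by (auto simp: div_less mod_less)
  fix i j assume "i < dim_row (four_block_mat (\<theta> A) (\<theta> B) (\<theta> C) (\<theta> D))"
    "j < dim_col (four_block_mat (\<theta> A) (\<theta> B) (\<theta> C) (\<theta> D))"
  then have i: "i < 2 * n" and j: "j < 2 * n" using t by auto
  show "ampl n 2 \<theta> (four_block_mat A B C D) $$ (i, j) = four_block_mat (\<theta> A) (\<theta> B) (\<theta> C) (\<theta> D) $$ (i, j)"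
    using block[OF i] block[OF j] i j c t by (simp add: ampl_def block_of_four_block split: if_splits)
qed (use t in \<open>auto simp: ampl_def\<close>)

lemma psd_mat_four_block_one:
  assumes x: "x \<in> carrier_mat n n"
  shows "psd_mat (2*n) (four_block_mat (1\<^sub>m n) x (mat_adjoint x) (mat_adjoint x * x))"
proof -
  define B where "B = four_block_mat (1\<^sub>m n) x (0\<^sub>m n n) (0\<^sub>m n n)"
  have B: "B \<in> carrier_mat (2*n) (2*n)" unfolding B_def using x by (simp add: mult_2)
  have adjoint: "mat_adjoint B = four_block_mat (1\<^sub>m n) (0\<^sub>m n n) (mat_adjoint x) (0\<^sub>m n n)"
    unfolding B_def using x by (subst mat_adjoint_four_block[of _ n n _ n _ n]) auto
  have "mat_adjoint B * B = four_block_mat (1\<^sub>m n) x (mat_adjoint x) (mat_adjoint x * x)"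
    unfolding adjoint unfolding B_def using x
    by (subst mult_four_block_mat[of "1\<^sub>m n" n n "0\<^sub>m n n" n "mat_adjoint x" n "0\<^sub>m n n"
          "1\<^sub>m n" n x n "0\<^sub>m n n" "0\<^sub>m n n"]) auto
  then show ?thesis unfolding psd_mat_def using B by (metis mult_carrier_mat mat_adjoint_carrier)
qed

lemma qform_pos_four_block_Schur_complement:
  assumes F: "qform_pos (2*n) (four_block_mat (1\<^sub>m n) y (mat_adjoint y) w)"
    and y: "y \<in> carrier_mat n n" and w: "w \<in> carrier_mat n n"
  shows "qform_pos n (w - mat_adjoint y * y)"
  unfolding qform_pos_def
proof (intro conjI ballI)
  show "w - mat_adjoint y * y \<in> carrier_mat n n"
    by (rule minus_carrier_mat[OF mult_carrier_mat[OF mat_adjoint_carrier[OF y] y]])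
  fix v :: "complex vec" assume v: "v \<in> carrier_vec n"
  let ?M = "four_block_mat (1\<^sub>m n) y (mat_adjoint y) w" and ?u = "(-1) \<cdot>\<^sub>v (y *\<^sub>v v)"
  have yv: "y *\<^sub>v v \<in> carrier_vec n" and u: "?u \<in> carrier_vec n" using y v by auto
  have yyv: "mat_adjoint y *\<^sub>v (y *\<^sub>v v) \<in> carrier_vec n"
    by (rule mult_mat_vec_carrier[OF mat_adjoint_carrier[OF y] yv])
  have wv: "w *\<^sub>v v \<in> carrier_vec n" using w v by simp
  have "(-1) \<cdot>\<^sub>v a + a = 0\<^sub>v n" if "a \<in> carrier_vec n" for a :: "complex vec"
    using that by (intro eq_vecI) auto
  then have "1\<^sub>m n *\<^sub>v ?u + y *\<^sub>v v = 0\<^sub>v n" using u yv by simp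
  moreover have "mat_adjoint y *\<^sub>v ?u = (-1) \<cdot>\<^sub>v (mat_adjoint y *\<^sub>v (y *\<^sub>v v))"
    using y yv by (intro mult_mat_vec) auto
  ultimately have "?M *\<^sub>v (?u @\<^sub>v v) = 0\<^sub>v n @\<^sub>v ((-1) \<cdot>\<^sub>v (mat_adjoint y *\<^sub>v (y *\<^sub>v v)) + w *\<^sub>v v)"
    using four_block_mat_mult_vec[OF one_carrier_mat y mat_adjoint_carrier[OF y] w u v] by simp
  then have "qform ?M (?u @\<^sub>v v) = cinner v (w *\<^sub>v v) - cinner v (mat_adjoint y *\<^sub>v (y *\<^sub>v v))"
    unfolding qform_def using u v yyv wv
    by (simp add: cinner_append[of _ n _ _ n] cinner_add_right[of _ n] cinner_smult_right)
  also have "\<dots> = qform w v - qform (mat_adjoint y * y) v"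
    unfolding qform_def assoc_mult_mat_vec[OF mat_adjoint_carrier[OF y] y v] ..
  also have "\<dots> = qform (w - mat_adjoint y * y) v"
    by (rule qform_minus[OF w mult_carrier_mat[OF mat_adjoint_carrier[OF y] y] v, symmetric])
  finally show "0 \<le> qform (w - mat_adjoint y * y) v"
    using F u v unfolding qform_pos_def mult_2 by (metis append_carrier_vec)
qed

locale unital_two_positive =
  fixes n :: nat and \<theta> :: "complex mat \<Rightarrow> complex mat"
  assumes linear: "lin_map_on n \<theta>" and unital: "\<theta> (1\<^sub>m n) = 1\<^sub>m n"
    and positive: "positive_map n \<theta>"
    and two_positive: "\<And>X. psd_mat (2*n) X \<Longrightarrow> psd_mat (2*n) (ampl n 2 \<theta> X)"
begin

lemma map_carrier[simp]: "A \<in> carrier_mat n n \<Longrightarrow> \<theta> A \<in> carrier_mat n n"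
  using linear unfolding lin_map_on_def by auto

lemma dim_map[simp]: "A \<in> carrier_mat n n \<Longrightarrow> dim_row (\<theta> A) = n"
  "A \<in> carrier_mat n n \<Longrightarrow> dim_col (\<theta> A) = n"
  by (simp_all add: carrier_matD[OF map_carrier])

lemma map_carrier_mult[simp]:
  "x \<in> carrier_mat n n \<Longrightarrow> y \<in> carrier_mat n n \<Longrightarrow> \<theta> (x * y) \<in> carrier_mat n n"
  by (simp add: mult_carrier_mat)

lemma map_add: "A \<in> carrier_mat n n \<Longrightarrow> B \<in> carrier_mat n n \<Longrightarrow> \<theta> (A + B) = \<theta> A + \<theta> B"
  using linear unfolding lin_map_on_def by auto

lemma map_smult: "A \<in> carrier_mat n n \<Longrightarrow> \<theta> (c \<cdot>\<^sub>m A) = c \<cdot>\<^sub>m \<theta> A"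
  using linear unfolding lin_map_on_def by auto

lemma map_zero: "\<theta> (0\<^sub>m n n) = 0\<^sub>m n n"
proof -
  have "\<theta> (0\<^sub>m n n) = \<theta> (0 \<cdot>\<^sub>m 0\<^sub>m n n)" by simp
  also have "\<dots> = 0 \<cdot>\<^sub>m \<theta> (0\<^sub>m n n)" by (rule map_smult) simp
  also have "\<dots> = 0\<^sub>m n n" using map_carrier[OF zero_carrier_mat] by (intro eq_matI) auto
  finally show ?thesis .
qed

lemma map_minus:
  assumes "A \<in> carrier_mat n n" "B \<in> carrier_mat n n"
  shows "\<theta> (A - B) = \<theta> A - \<theta> B"
proof -
  have "A - B = A + (-1) \<cdot>\<^sub>m B" using assms by (intro eq_matI) auto
  then have "\<theta> (A - B) = \<theta> A + (-1) \<cdot>\<^sub>m \<theta> B" using assms by (simp add: map_add map_smult)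
  also have "\<dots> = \<theta> A - \<theta> B" using assms map_carrier[of A] map_carrier[of B] by (intro eq_matI) auto
  finally show ?thesis .
qed

lemma map_qform_pos: "qform_pos n A \<Longrightarrow> qform_pos n (\<theta> A)"
  using positive unfolding positive_map_def by (simp add: qform_pos_iff_psd)

lemma ampl_four_block_one:
  assumes x: "x \<in> carrier_mat n n"
  shows "psd_mat (2*n) (four_block_mat (1\<^sub>m n) (\<theta> x) (\<theta> (mat_adjoint x)) (\<theta> (mat_adjoint x * x)))"
  using two_positive[OF psd_mat_four_block_one[OF x]] x
  by (subst (asm) ampl_2_four_block) (auto simp: unital)

lemma map_adjoint:
  assumes x: "x \<in> carrier_mat n n"
  shows "\<theta> (mat_adjoint x) = mat_adjoint (\<theta> x)"
proof (rule eq_matI)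
  let ?M = "four_block_mat (1\<^sub>m n) (\<theta> x) (\<theta> (mat_adjoint x)) (\<theta> (mat_adjoint x * x))"
  have H: "mat_adjoint ?M = ?M"
    using ampl_four_block_one[OF x] psd_imp_qform_pos qform_pos_hermitian by blast
  have M: "?M \<in> carrier_mat (2*n) (2*n)" using x unfolding mult_2 by (intro four_block_carrier_mat) auto
  fix i j assume "i < dim_row (mat_adjoint (\<theta> x))" "j < dim_col (mat_adjoint (\<theta> x))"
  then have i: "i < n" and j: "j < n" using x by auto
  have "?M $$ (n + i, j) = cnj (?M $$ (j, n + i))" using hermitian_index[OF H M, of j "n+i"] i j by simp
  moreover have "\<theta> (mat_adjoint x) \<in> carrier_mat n n" "\<theta> x \<in> carrier_mat n n"
    "\<theta> (mat_adjoint x * x) \<in> carrier_mat n n"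
    using x by auto
  ultimately show "\<theta> (mat_adjoint x) $$ (i, j) = mat_adjoint (\<theta> x) $$ (i, j)" using i j x by simp
qed (use x in auto)

lemma Kadison_Schwarz:
  assumes x: "x \<in> carrier_mat n n"
  shows "qform_pos n (\<theta> (mat_adjoint x * x) - mat_adjoint (\<theta> x) * \<theta> x)"
  using ampl_four_block_one[OF x] x
  by (intro qform_pos_four_block_Schur_complement) (auto simp: map_adjoint psd_imp_qform_pos)

end

lemma completely_positive_imp_unital_two_positive:
  assumes "completely_positive n \<theta>" "\<theta> (1\<^sub>m n) = 1\<^sub>m n"
  shows "unital_two_positive n \<theta>"
proof
  show lin: "lin_map_on n \<theta>" using assms unfolding completely_positive_def by auto
  show "\<theta> (1\<^sub>m n) = 1\<^sub>m n" by fact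
  show "psd_mat (2*n) X \<Longrightarrow> psd_mat (2*n) (ampl n 2 \<theta> X)" for X
    using assms unfolding completely_positive_def by blast
  show "positive_map n \<theta>"
    unfolding positive_map_def
  proof (intro allI impI)
    fix X assume X: "psd_mat n X"
    then have "X \<in> carrier_mat n n" by (simp add: psd_mat_def)
    then have "ampl n 1 \<theta> X = \<theta> X" using lin by (intro ampl_1) (auto simp: lin_map_on_def)
    moreover have "psd_mat (1*n) (ampl n 1 \<theta> X)"
      using assms(1) X unfolding completely_positive_def by (metis mult_1)
    ultimately show "psd_mat n (\<theta> X)" by simp
  qed
qed

section \<open>Idempotent unital PPT maps\<close>

locale idempotent_unital_ppt =
  fixes n :: nat and \<phi> :: "complex mat \<Rightarrow> complex mat"
  assumes ppt_phi: "PPT_map n \<phi>" and unital_phi: "unital_map n \<phi>"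
    and idempotent_phi: "\<forall>A \<in> carrier_mat n n. \<phi> (\<phi> A) = \<phi> A"
begin

sublocale unital_two_positive n \<phi>
  using ppt_phi unital_phi completely_positive_imp_unital_two_positive
  unfolding PPT_map_def unital_map_def by blast

sublocale T: unital_two_positive n "transpose_mat \<circ> \<phi>"
  using ppt_phi unital_phi completely_positive_imp_unital_two_positive[of n "transpose_mat \<circ> \<phi>"]
  unfolding PPT_map_def unital_map_def by simp

abbreviation phi_range :: "complex mat set" where
  "phi_range \<equiv> \<phi> ` carrier_mat n n"

lemma map_map: "A \<in> carrier_mat n n \<Longrightarrow> \<phi> (\<phi> A) = \<phi> A"
  using idempotent_phi by blast

lemma range_iff: "a \<in> phi_range \<longleftrightarrow> a \<in> carrier_mat n n \<and> \<phi> a = a"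
  using idempotent_phi by (auto intro: rev_image_eqI)

lemma range_carrier: "a \<in> phi_range \<Longrightarrow> a \<in> carrier_mat n n"
  by (simp add: range_iff)

lemma range_fixed: "a \<in> phi_range \<Longrightarrow> \<phi> a = a"
  by (simp add: range_iff)

lemma range_adjoint: "a \<in> phi_range \<Longrightarrow> mat_adjoint a \<in> phi_range"
  by (simp add: range_iff map_adjoint)

lemma range_add: "a \<in> phi_range \<Longrightarrow> b \<in> phi_range \<Longrightarrow> a + b \<in> phi_range"
  by (simp add: range_iff map_add)

lemma range_smult: "a \<in> phi_range \<Longrightarrow> c \<cdot>\<^sub>m a \<in> phi_range"
  by (simp add: range_iff map_smult)

lemma map_mult_in_range: "a \<in> carrier_mat n n \<Longrightarrow> b \<in> carrier_mat n n \<Longrightarrow> \<phi> (a * b) \<in> phi_range"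
  by (simp add: mult_carrier_mat)

lemma map_kernel_minus_map:
  "A \<in> carrier_mat n n \<Longrightarrow> \<phi> (\<phi> A - A) = 0\<^sub>m n n"
  by (simp add: map_minus map_map)

text \<open>Kadison--Schwarz for the 2-positive map T \<circ> \<phi>, transposed back.\<close>

lemma transposed_Kadison_Schwarz:
  assumes x: "x \<in> carrier_mat n n"
  shows "qform_pos n (\<phi> (mat_adjoint x * x) - \<phi> x * mat_adjoint (\<phi> x))"
proof -
  let ?w = "\<phi> (mat_adjoint x * x)" and ?y = "\<phi> x"
  have w: "?w \<in> carrier_mat n n" and y: "?y \<in> carrier_mat n n" using x by auto
  have yT: "transpose_mat ?y \<in> carrier_mat n n" and aT: "mat_adjoint (transpose_mat ?y) \<in> carrier_mat n n"
    using y by auto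
  have "transpose_mat (mat_adjoint (transpose_mat ?y)) = mat_adjoint ?y"
    using y by (intro eq_matI) auto
  then have "transpose_mat (mat_adjoint (transpose_mat ?y) * transpose_mat ?y) = ?y * mat_adjoint ?y"
    unfolding transpose_mult[OF aT yT] by simp
  then have "transpose_mat (transpose_mat ?w - mat_adjoint (transpose_mat ?y) * transpose_mat ?y) =
      ?w - ?y * mat_adjoint ?y"
    using transpose_minus[of "transpose_mat ?w" n n "mat_adjoint (transpose_mat ?y) * transpose_mat ?y"]
      w mult_carrier_mat[OF aT yT] by simp
  then show ?thesis
    using qform_pos_transpose[OF T.Kadison_Schwarz[OF x]] by simp
qed

lemma range_normal:
  assumes a: "a \<in> phi_range"
  shows "\<phi> (mat_adjoint a * a) = \<phi> (a * mat_adjoint a)"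
proof -
  have A: "a \<in> carrier_mat n n" and A': "mat_adjoint a \<in> carrier_mat n n"
    using range_carrier[OF a] by auto
  have pa: "\<phi> a = a" and pa': "\<phi> (mat_adjoint a) = mat_adjoint a"
    using range_fixed[OF a] range_fixed[OF range_adjoint[OF a]] by auto
  have "qform_pos n (\<phi> (\<phi> (mat_adjoint a * a) - \<phi> a * mat_adjoint (\<phi> a)))"
    by (rule map_qform_pos[OF transposed_Kadison_Schwarz[OF A]])
  then have 1: "qform_pos n (\<phi> (mat_adjoint a * a) - \<phi> (a * mat_adjoint a))"
    unfolding pa using A A' by (simp add: map_minus mult_carrier_mat map_map)
  have "qform_pos n (\<phi> (\<phi> (mat_adjoint (mat_adjoint a) * mat_adjoint a) -
      \<phi> (mat_adjoint a) * mat_adjoint (\<phi> (mat_adjoint a))))"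
    by (rule map_qform_pos[OF transposed_Kadison_Schwarz[OF A']])
  then have 2: "qform_pos n (\<phi> (a * mat_adjoint a) - \<phi> (mat_adjoint a * a))"
    unfolding pa' using A A' by (simp add: map_minus mult_carrier_mat map_map)
  show ?thesis by (rule qform_pos_antisym[OF 1 2]) (use A A' in auto)
qed

definition normality_defect :: "nat \<Rightarrow> nat \<Rightarrow> complex mat \<Rightarrow> complex mat \<Rightarrow> complex" where
  "normality_defect p q a b = \<phi> (mat_adjoint a * b) $$ (p,q) - \<phi> (b * mat_adjoint a) $$ (p,q)"

lemma normality_defect_add_smult_left:
  assumes a: "a \<in> carrier_mat n n" "a' \<in> carrier_mat n n" and b: "b \<in> carrier_mat n n"
    and pq: "p < n" "q < n"
  shows "normality_defect p q (a + c \<cdot>\<^sub>m a') b = normality_defect p q a b + cnj c * normality_defect p q a' b"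
proof -
  have A: "mat_adjoint a \<in> carrier_mat n n" "cnj c \<cdot>\<^sub>m mat_adjoint a' \<in> carrier_mat n n"
    and A': "mat_adjoint a' \<in> carrier_mat n n" using a by auto
  have adj: "mat_adjoint (a + c \<cdot>\<^sub>m a') = mat_adjoint a + cnj c \<cdot>\<^sub>m mat_adjoint a'"
    using a by (simp add: mat_adjoint_add mat_adjoint_smult)
  have "\<phi> (mat_adjoint (a + c \<cdot>\<^sub>m a') * b) = \<phi> (mat_adjoint a * b) + cnj c \<cdot>\<^sub>m \<phi> (mat_adjoint a' * b)"
    unfolding adj add_mult_distrib_mat[OF A b] mult_smult_assoc_mat[OF A' b]
    using A A' b by (simp add: map_add map_smult mult_carrier_mat)
  moreover have "\<phi> (b * mat_adjoint (a + c \<cdot>\<^sub>m a')) = \<phi> (b * mat_adjoint a) + cnj c \<cdot>\<^sub>m \<phi> (b * mat_adjoint a')"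
    unfolding adj mult_add_distrib_mat[OF b A] mult_smult_distrib[OF b A']
    using A A' b by (simp add: map_add map_smult mult_carrier_mat)
  ultimately show ?thesis
    unfolding normality_defect_def using pq A A' b by (simp add: algebra_simps)
qed

lemma normality_defect_add_smult_right:
  assumes a: "a \<in> carrier_mat n n" and b: "b \<in> carrier_mat n n" "b' \<in> carrier_mat n n"
    and pq: "p < n" "q < n"
  shows "normality_defect p q a (b + c \<cdot>\<^sub>m b') = normality_defect p q a b + c * normality_defect p q a b'"
proof -
  have A: "mat_adjoint a \<in> carrier_mat n n" and cb: "c \<cdot>\<^sub>m b' \<in> carrier_mat n n" using a b by auto
  have "\<phi> (mat_adjoint a * (b + c \<cdot>\<^sub>m b')) = \<phi> (mat_adjoint a * b) + c \<cdot>\<^sub>m \<phi> (mat_adjoint a * b')"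
    unfolding mult_add_distrib_mat[OF A b(1) cb] mult_smult_distrib[OF A b(2)]
    using A b by (simp add: map_add map_smult mult_carrier_mat)
  moreover have "\<phi> ((b + c \<cdot>\<^sub>m b') * mat_adjoint a) = \<phi> (b * mat_adjoint a) + c \<cdot>\<^sub>m \<phi> (b' * mat_adjoint a)"
    unfolding add_mult_distrib_mat[OF b(1) cb A] mult_smult_assoc_mat[OF b(2) A]
    using A b by (simp add: map_add map_smult mult_carrier_mat)
  ultimately show ?thesis
    unfolding normality_defect_def using pq A b by (simp add: algebra_simps)
qed

text \<open>Polarization: the defect is sesquilinear and vanishes on the diagonal by range_normal.\<close>

lemma normality_defect_range:
  assumes a: "a \<in> phi_range" and b: "b \<in> phi_range" and pq: "p < n" "q < n"
  shows "normality_defect p q a b = 0"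
proof -
  have A: "a \<in> carrier_mat n n" and B: "b \<in> carrier_mat n n" using a b by (auto simp: range_iff)
  have diagonal: "normality_defect p q x x = 0" if "x \<in> phi_range" for x
    unfolding normality_defect_def using range_normal[OF that] by simp
  have expand: "normality_defect p q (a + c \<cdot>\<^sub>m b) (a + c \<cdot>\<^sub>m b) =
      normality_defect p q a a + c * normality_defect p q a b + cnj c * normality_defect p q b a
      + cnj c * c * normality_defect p q b b" for c
    using A B pq
    by (simp add: normality_defect_add_smult_left normality_defect_add_smult_right algebra_simps)
  have "normality_defect p q a b + normality_defect p q b a = 0"
    using expand[of 1] diagonal a b range_add[OF a range_smult[OF b, of 1]] by simp
  moreover have "\<i> * (normality_defect p q a b - normality_defect p q b a) = 0"
    using expand[of \<i>] diagonal a b range_add[OF a range_smult[OF b, of \<i>]]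
    by (simp add: algebra_simps)
  ultimately show ?thesis by (simp add: algebra_simps)
qed

lemma range_product_commute:
  assumes a: "a \<in> phi_range" and b: "b \<in> phi_range"
  shows "\<phi> (a * b) = \<phi> (b * a)"
proof (rule eq_matI)
  have A: "a \<in> carrier_mat n n" and B: "b \<in> carrier_mat n n" using a b by (auto simp: range_iff)
  then show "dim_row (\<phi> (a * b)) = dim_row (\<phi> (b * a))" "dim_col (\<phi> (a * b)) = dim_col (\<phi> (b * a))"
    by (simp_all add: mult_carrier_mat)
  fix p q assume "p < dim_row (\<phi> (b * a))" "q < dim_col (\<phi> (b * a))"
  then have pq: "p < n" "q < n" using A B by (simp_all add: mult_carrier_mat)
  show "\<phi> (a * b) $$ (p, q) = \<phi> (b * a) $$ (p, q)"
    using normality_defect_range[OF range_adjoint[OF a] b pq] unfolding normality_defect_def by simp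
qed

text \<open>Choi--Effros: the Schwarz inequality for x = y + s k^* with \<phi> k = 0 forces \<phi>(k y) = 0.\<close>

lemma kernel_qform_bound:
  assumes k: "k \<in> carrier_mat n n" and pk: "\<phi> k = 0\<^sub>m n n" and yS: "y \<in> phi_range"
    and v: "v \<in> carrier_vec n"
  shows "0 \<le> s * cnj (qform (\<phi> (k * y)) v) + cnj s * qform (\<phi> (k * y)) v
    + cnj s * s * qform (\<phi> (k * mat_adjoint k)) v"
proof -
  have y: "y \<in> carrier_mat n n" and py: "\<phi> y = y" using yS by (auto simp: range_iff)
  have K': "mat_adjoint k \<in> carrier_mat n n" and Y': "mat_adjoint y \<in> carrier_mat n n" using k y by auto
  have ky: "k * y \<in> carrier_mat n n" and kk: "k * mat_adjoint k \<in> carrier_mat n n"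
    and yk: "mat_adjoint y * mat_adjoint k \<in> carrier_mat n n" and yy: "mat_adjoint y * y \<in> carrier_mat n n"
    using k y K' Y' by (auto simp: mult_carrier_mat)
  define x where "x = y + s \<cdot>\<^sub>m mat_adjoint k"
  have x: "x \<in> carrier_mat n n" using y K' by (simp add: x_def)
  have xx: "mat_adjoint x * x \<in> carrier_mat n n" by (rule mult_carrier_mat[OF mat_adjoint_carrier[OF x] x])
  have "\<phi> (mat_adjoint k) = 0\<^sub>m n n" using pk k by (simp add: map_adjoint)
  then have px: "\<phi> x = y" using y K' py by (simp add: x_def map_add map_smult)
  have "qform_pos n (\<phi> (\<phi> (mat_adjoint x * x) - mat_adjoint (\<phi> x) * \<phi> x))"
    by (rule map_qform_pos[OF Kadison_Schwarz[OF x]])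
  then have "qform_pos n (\<phi> (mat_adjoint x * x) - \<phi> (mat_adjoint y * y))"
    unfolding px map_minus[OF map_carrier[OF xx] yy] map_map[OF xx] .
  then have "0 \<le> qform (\<phi> (mat_adjoint x * x)) v - qform (\<phi> (mat_adjoint y * y)) v"
    using v xx yy by (simp add: qform_pos_def qform_minus[of _ n])
  moreover have "\<phi> (mat_adjoint x * x) = (\<phi> (mat_adjoint y * y) + cnj s \<cdot>\<^sub>m \<phi> (k * y)) +
      (s \<cdot>\<^sub>m \<phi> (mat_adjoint y * mat_adjoint k) + (cnj s * s) \<cdot>\<^sub>m \<phi> (k * mat_adjoint k))"
  proof -
    have c1: "cnj s \<cdot>\<^sub>m (k * y) \<in> carrier_mat n n" and c2: "s \<cdot>\<^sub>m (mat_adjoint y * mat_adjoint k) \<in> carrier_mat n n"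
      and c3: "(cnj s * s) \<cdot>\<^sub>m (k * mat_adjoint k) \<in> carrier_mat n n" using ky yk kk by auto
    show ?thesis
      unfolding x_def adjoint_mult_self_add_smult_adjoint[OF y k]
        map_add[OF add_carrier_mat[OF c1] add_carrier_mat[OF c3]] map_add[OF yy c1] map_add[OF c2 c3]
        map_smult[OF ky] map_smult[OF yk] map_smult[OF kk] ..
  qed
  moreover have "qform (\<phi> (mat_adjoint y * mat_adjoint k)) v = cnj (qform (\<phi> (k * y)) v)"
    using qform_adjoint[OF map_carrier[OF ky] v] map_adjoint[OF ky] by (simp add: mat_adjoint_mult[OF k y])
  ultimately show ?thesis
    using v ky kk yk yy by (simp add: qform_add[of _ n] qform_smult[of _ n] algebra_simps)
qed

lemma kernel_mult_range:
  assumes k: "k \<in> carrier_mat n n" and pk: "\<phi> k = 0\<^sub>m n n" and yS: "y \<in> phi_range"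
  shows "\<phi> (k * y) = 0\<^sub>m n n"
proof (rule mat_eq_0_if_qform_eq_0)
  have y: "y \<in> carrier_mat n n" using yS by (simp add: range_iff)
  then show "\<phi> (k * y) \<in> carrier_mat n n" using k by simp
  have "qform_pos n (k * mat_adjoint k)"
    using k by (intro psd_imp_qform_pos) (auto simp: psd_mat_def intro!: bexI[of _ "mat_adjoint k"])
  then have kk: "qform_pos n (\<phi> (k * mat_adjoint k))" by (rule map_qform_pos)
  fix v :: "complex vec" assume v: "v \<in> carrier_vec n"
  show "qform (\<phi> (k * y)) v = 0"
    by (rule complex_eq_0_if_quadratic_nonneg[OF kernel_qform_bound[OF k pk yS v]])
      (use kk v in \<open>simp add: qform_pos_def\<close>)
qed

lemma range_mult_kernel:
  assumes k: "k \<in> carrier_mat n n" and pk: "\<phi> k = 0\<^sub>m n n" and yS: "y \<in> phi_range"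
  shows "\<phi> (y * k) = 0\<^sub>m n n"
proof -
  have y: "y \<in> carrier_mat n n" using yS by (simp add: range_iff)
  have "\<phi> (mat_adjoint k) = 0\<^sub>m n n" using pk k by (simp add: map_adjoint)
  then have "\<phi> (mat_adjoint k * mat_adjoint y) = 0\<^sub>m n n"
    using kernel_mult_range[OF _ _ range_adjoint[OF yS]] k by simp
  then have "mat_adjoint (\<phi> (y * k)) = 0\<^sub>m n n"
    using y k by (simp add: map_adjoint mult_carrier_mat flip: mat_adjoint_mult)
  then show ?thesis using mat_adjoint_adjoint[of "\<phi> (y * k)"] by simp
qed

lemma range_product_assoc:
  assumes a: "a \<in> phi_range" and b: "b \<in> phi_range" and c: "c \<in> phi_range"
  shows "\<phi> (\<phi> (a * b) * c) = \<phi> (a * \<phi> (b * c))"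
proof -
  have A: "a \<in> carrier_mat n n" and B: "b \<in> carrier_mat n n" and C: "c \<in> carrier_mat n n"
    using a b c by (auto simp: range_iff)
  have ab: "a * b \<in> carrier_mat n n" and bc: "b * c \<in> carrier_mat n n"
    using A B C by (auto simp: mult_carrier_mat)
  have "\<phi> ((\<phi> (a * b) - a * b) * c) = 0\<^sub>m n n"
    by (rule kernel_mult_range[OF minus_carrier_mat[OF ab] map_kernel_minus_map[OF ab] c])
  then have "\<phi> (\<phi> (a * b) * c) - \<phi> (a * b * c) = 0\<^sub>m n n"
    unfolding minus_mult_distrib_mat[OF map_carrier[OF ab] ab C]
      map_minus[OF mult_carrier_mat[OF map_carrier[OF ab] C] mult_carrier_mat[OF ab C]] .
  then have left: "\<phi> (\<phi> (a * b) * c) = \<phi> (a * b * c)"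
    by (rule mat_eq_if_minus_eq_0[rotated 2]) (use ab C in \<open>simp_all add: mult_carrier_mat\<close>)
  have "\<phi> (a * (\<phi> (b * c) - b * c)) = 0\<^sub>m n n"
    by (rule range_mult_kernel[OF minus_carrier_mat[OF bc] map_kernel_minus_map[OF bc] a])
  then have "\<phi> (a * \<phi> (b * c)) - \<phi> (a * (b * c)) = 0\<^sub>m n n"
    unfolding mult_minus_distrib_mat[OF A map_carrier[OF bc] bc]
      map_minus[OF mult_carrier_mat[OF A map_carrier[OF bc]] mult_carrier_mat[OF A bc]] .
  then have right: "\<phi> (a * \<phi> (b * c)) = \<phi> (a * (b * c))"
    by (rule mat_eq_if_minus_eq_0[rotated 2]) (use A bc in \<open>simp_all add: mult_carrier_mat\<close>)
  show ?thesis unfolding left right assoc_mult_mat[OF A B C] ..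
qed

lemma vec_norm_map_le_qform:
  assumes x: "x \<in> carrier_mat n n" and v: "v \<in> carrier_vec n"
  shows "(vec_norm (\<phi> x *\<^sub>v v))^2 \<le> Re (qform (\<phi> (mat_adjoint x * x)) v)"
proof -
  have xx: "\<phi> (mat_adjoint x * x) \<in> carrier_mat n n" and yy: "mat_adjoint (\<phi> x) * \<phi> x \<in> carrier_mat n n"
    using x by (auto simp: mult_carrier_mat)
  have "0 \<le> qform (\<phi> (mat_adjoint x * x) - mat_adjoint (\<phi> x) * \<phi> x) v"
    using Kadison_Schwarz[OF x] v unfolding qform_pos_def by blast
  then show ?thesis
    unfolding qform_minus[OF xx yy v] qform_adjoint_mult_self[OF map_carrier[OF x] v]
    by (simp add: complex_nonneg_iff)
qed

text \<open>Contractivity: the order relation x^* x \<le> \<parallel>x\<parallel>^2 1 is preserved by the unital positive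
  map \<phi>, and the Schwarz inequality then bounds \<parallel>\<phi>(x) v\<parallel>.\<close>

lemma op_norm_map_le:
  assumes x: "x \<in> carrier_mat n n"
  shows "op_norm (\<phi> x) \<le> op_norm x"
proof (rule op_norm_leI[OF op_norm_nonneg])
  define s where "s = op_norm x"
  have xx: "mat_adjoint x * x \<in> carrier_mat n n" and sI: "of_real (s^2) \<cdot>\<^sub>m 1\<^sub>m n \<in> carrier_mat n n"
    using x by (auto simp: mult_carrier_mat)
  let ?M = "of_real (s^2) \<cdot>\<^sub>m 1\<^sub>m n - mat_adjoint x * x"
  have "qform_pos n ?M" unfolding qform_pos_def
  proof (intro conjI ballI)
    show "?M \<in> carrier_mat n n" using xx by (simp add: minus_carrier_mat)
    fix v :: "complex vec" assume v: "v \<in> carrier_vec n"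
    have "vec_norm (x *\<^sub>v v) \<le> s * vec_norm v"
      unfolding s_def by (rule vec_norm_mult_le_op_norm) (use x v in simp)
    then have "(vec_norm (x *\<^sub>v v))^2 \<le> (s * vec_norm v)^2"
      by (rule power_mono[OF _ vec_norm_nonneg])
    then show "0 \<le> qform ?M v"
      unfolding qform_minus[OF sI xx v] qform_smult[OF one_carrier_mat v] qform_one[OF v]
        qform_adjoint_mult_self[OF x v]
      by (simp add: complex_nonneg_iff power_mult_distrib)
  qed
  then have F: "qform_pos n (\<phi> ?M)" by (rule map_qform_pos)
  have PM: "\<phi> ?M = of_real (s^2) \<cdot>\<^sub>m 1\<^sub>m n - \<phi> (mat_adjoint x * x)"
    using sI xx by (simp add: map_minus map_smult unital)
  fix v :: "complex vec" assume "v \<in> carrier_vec (dim_col (\<phi> x))"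
  then have v: "v \<in> carrier_vec n" using x by simp
  have "0 \<le> qform (\<phi> ?M) v" using F v unfolding qform_pos_def by blast
  then have "Re (qform (\<phi> (mat_adjoint x * x)) v) \<le> s^2 * (vec_norm v)^2"
    unfolding PM qform_minus[OF sI map_carrier[OF xx] v] qform_smult[OF one_carrier_mat v] qform_one[OF v]
    by (simp add: complex_nonneg_iff)
  with vec_norm_map_le_qform[OF x v] have "(vec_norm (\<phi> x *\<^sub>v v))^2 \<le> (s * vec_norm v)^2"
    by (simp add: power_mult_distrib)
  then show "vec_norm (\<phi> x *\<^sub>v v) \<le> op_norm x * vec_norm v"
    unfolding s_def[symmetric] by (rule power2_le_imp_le) (simp add: s_def op_norm_nonneg vec_norm_nonneg)
qed

lemma op_norm_Cstar_identity:
  assumes a: "a \<in> phi_range"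
  shows "op_norm (\<phi> (mat_adjoint a * a)) = (op_norm a)^2"
proof (rule antisym)
  have A: "a \<in> carrier_mat n n" using a by (simp add: range_iff)
  have aa: "mat_adjoint a * a \<in> carrier_mat n n" by (rule mult_carrier_mat[OF mat_adjoint_carrier[OF A] A])
  have "op_norm (\<phi> (mat_adjoint a * a)) \<le> op_norm (mat_adjoint a) * op_norm a"
    using op_norm_map_le[OF aa] op_norm_mult[OF mat_adjoint_carrier[OF A] A] by linarith
  also have "\<dots> \<le> op_norm a * op_norm a"
    by (rule mult_right_mono[OF op_norm_adjoint_le[OF A] op_norm_nonneg])
  finally show "op_norm (\<phi> (mat_adjoint a * a)) \<le> (op_norm a)^2" by (simp add: power2_eq_square)
  define N where "N = op_norm (\<phi> (mat_adjoint a * a))"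
  have N0: "N \<ge> 0" unfolding N_def by (rule op_norm_nonneg)
  have "op_norm a \<le> sqrt N"
  proof (rule op_norm_leI)
    show "0 \<le> sqrt N" using N0 by simp
    fix v :: "complex vec" assume "v \<in> carrier_vec (dim_col a)"
    then have v: "v \<in> carrier_vec n" using A by simp
    have "(vec_norm (a *\<^sub>v v))^2 \<le> Re (qform (\<phi> (mat_adjoint a * a)) v)"
      using vec_norm_map_le_qform[OF A v] range_fixed[OF a] by simp
    also have "\<dots> \<le> vec_norm v * vec_norm (\<phi> (mat_adjoint a * a) *\<^sub>v v)"
      using cinner_Cauchy_Schwarz[of v "\<phi> (mat_adjoint a * a) *\<^sub>v v"] aa v
        complex_Re_le_cmod[of "qform (\<phi> (mat_adjoint a * a)) v"]
      unfolding qform_def by simp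
    also have "\<dots> \<le> vec_norm v * (N * vec_norm v)"
      unfolding N_def by (rule mult_left_mono[OF vec_norm_mult_le_op_norm vec_norm_nonneg]) (use aa v in simp)
    finally have "(vec_norm (a *\<^sub>v v))^2 \<le> (sqrt N * vec_norm v)^2"
      using N0 by (simp add: power_mult_distrib power2_eq_square algebra_simps)
    then show "vec_norm (a *\<^sub>v v) \<le> sqrt N * vec_norm v"
      by (rule power2_le_imp_le) (simp add: N0 vec_norm_nonneg)
  qed
  then have "(op_norm a)^2 \<le> (sqrt N)^2" by (rule power_mono[OF _ op_norm_nonneg])
  then show "(op_norm a)^2 \<le> op_norm (\<phi> (mat_adjoint a * a))" using N0 unfolding N_def by simp
qed

lemma range_complete:
  assumes f: "\<forall>k. f k \<in> phi_range"
    and Cauchy: "\<forall>e>0. \<exists>N. \<forall>p\<ge>N. \<forall>q\<ge>N. op_norm (f p - f q) < e"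
  shows "\<exists>L\<in>phi_range. (\<lambda>k. op_norm (f k - L)) \<longlonglongrightarrow> 0"
proof -
  have F: "f k \<in> carrier_mat n n" and fixed: "\<phi> (f k) = f k" for k using f by (auto simp: range_iff)
  obtain L where L: "L \<in> carrier_mat n n" and lim: "(\<lambda>k. op_norm (f k - L)) \<longlonglongrightarrow> 0"
    using op_norm_Cauchy_convergent[OF F Cauchy] by blast
  have PL: "\<phi> L \<in> carrier_mat n n" using L by simp
  have bound: "op_norm (\<phi> L - L) \<le> 2 * op_norm (f k - L)" for k
  proof -
    have "\<phi> L - L = \<phi> (L - f k) + (f k - L)"
      unfolding map_minus[OF L F] fixed using PL L F[of k] by (intro eq_matI) auto
    then have "op_norm (\<phi> L - L) \<le> op_norm (\<phi> (L - f k)) + op_norm (f k - L)"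
      using op_norm_triangle[OF map_carrier[OF minus_carrier_mat[OF F]] minus_carrier_mat[OF L]] by simp
    also have "\<dots> \<le> op_norm (L - f k) + op_norm (f k - L)"
      using op_norm_map_le[OF minus_carrier_mat[OF F]] by simp
    also have "op_norm (L - f k) = op_norm (f k - L)" by (rule op_norm_minus_commute[OF L F])
    finally show ?thesis by simp
  qed
  have "(\<lambda>k. 2 * op_norm (f k - L)) \<longlonglongrightarrow> 2 * 0" by (rule tendsto_mult[OF tendsto_const lim])
  then have "op_norm (\<phi> L - L) \<le> 2 * 0" by (rule LIMSEQ_le_const) (use bound in blast)
  then have "\<phi> L - L = 0\<^sub>m n n" by (intro op_norm_le_0_imp_zero[OF minus_carrier_mat[OF L]]) simp
  then have "\<phi> L = L" by (rule mat_eq_if_minus_eq_0[OF PL L])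
  then show ?thesis using L lim range_iff by blast
qed

lemma range_is_Cstar_algebra: "is_Cstar_algebra n phi_range (\<lambda>a b. \<phi> (a * b))"
  unfolding is_Cstar_algebra_def
proof (intro conjI ballI allI impI)
  show "phi_range \<subseteq> carrier_mat n n" by auto
  show "0\<^sub>m n n \<in> phi_range" by (simp add: range_iff map_zero)
  fix a b c assume a: "a \<in> phi_range" and b: "b \<in> phi_range"
  have A: "a \<in> carrier_mat n n" and B: "b \<in> carrier_mat n n" using a b by (auto simp: range_iff)
  show "a + b \<in> phi_range" by (rule range_add[OF a b])
  show "\<phi> (a * b) \<in> phi_range" by (rule map_mult_in_range[OF A B])
  show "mat_adjoint (\<phi> (a * b)) = \<phi> (mat_adjoint b * mat_adjoint a)"
    using A B by (simp add: map_adjoint mult_carrier_mat flip: mat_adjoint_mult)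
  show "op_norm (\<phi> (a * b)) \<le> op_norm a * op_norm b"
    using op_norm_map_le[of "a * b"] op_norm_mult[OF A B] A B by (simp add: mult_carrier_mat)
  fix z
  show "\<phi> (z \<cdot>\<^sub>m a * b) = z \<cdot>\<^sub>m \<phi> (a * b)" "\<phi> (a * (z \<cdot>\<^sub>m b)) = z \<cdot>\<^sub>m \<phi> (a * b)"
    using A B by (simp_all add: mult_smult_assoc_mat mult_smult_distrib map_smult mult_carrier_mat)
next
  fix a c assume "a \<in> phi_range"
  then show "c \<cdot>\<^sub>m a \<in> phi_range" by (rule range_smult)
next
  fix a b c assume a: "a \<in> phi_range" and b: "b \<in> phi_range" and c: "c \<in> phi_range"
  show "\<phi> (\<phi> (a * b) * c) = \<phi> (a * \<phi> (b * c))" by (rule range_product_assoc[OF a b c])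
  have A: "a \<in> carrier_mat n n" and B: "b \<in> carrier_mat n n" and C: "c \<in> carrier_mat n n"
    using a b c by (auto simp: range_iff)
  show "\<phi> (a * (b + c)) = \<phi> (a * b) + \<phi> (a * c)" "\<phi> ((a + b) * c) = \<phi> (a * c) + \<phi> (b * c)"
    using A B C by (simp_all add: mult_add_distrib_mat add_mult_distrib_mat map_add mult_carrier_mat)
next
  fix a assume a: "a \<in> phi_range"
  show "mat_adjoint a \<in> phi_range" by (rule range_adjoint[OF a])
  show "op_norm (\<phi> (mat_adjoint a * a)) = (op_norm a)^2" by (rule op_norm_Cstar_identity[OF a])
next
  fix f :: "nat \<Rightarrow> complex mat"
  assume "(\<forall>m. f m \<in> phi_range) \<and> (\<forall>e>0. \<exists>N. \<forall>p\<ge>N. \<forall>q\<ge>N. op_norm (f p - f q) < e)"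
  then show "\<exists>L\<in>phi_range. (\<lambda>m. op_norm (f m - L)) \<longlonglongrightarrow> 0" using range_complete by blast
qed

lemma range_is_abelian: "is_abelian phi_range (\<lambda>a b. \<phi> (a * b))"
  unfolding is_abelian_def using range_product_commute by blast

end

theorem mainTheorem4:
  fixes n :: nat and \<phi> :: "complex mat \<Rightarrow> complex mat"
  assumes "PPT_map n \<phi>"
    and "unital_map n \<phi>"
    and "\<forall>A \<in> carrier_mat n n. \<phi> (\<phi> A) = \<phi> A"
  shows "is_Cstar_algebra n (\<phi> ` carrier_mat n n) (\<lambda>a b. \<phi> (a * b))
       \<and> is_abelian (\<phi> ` carrier_mat n n) (\<lambda>a b. \<phi> (a * b))"
proof -
  interpret idempotent_unital_ppt n \<phi> using assms by unfold_locales
  show ?thesis using range_is_Cstar_algebra range_is_abelian by blast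
qed

end
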